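(* Let $P_\pm,R_\pm\in\mathrm{Sym}(n,\mathbb{R})$ and $Q_\pm\in\mathrm{Mat}(n,\mathbb{R})$ be such that $\begin{bmatrix}P_-&Q_-\\Q_-^T&R_-\end{bmatrix}$ and $\begin{bmatrix}P_+&Q_+\\Q_+^T&R_+\end{bmatrix}$ are positive definite. Let $B(\pm\infty)=\begin{bmatrix}P_\pm^{-1}&-P_\pm^{-1}Q_\pm\\-Q_\pm^TP_\pm^{-1}&Q_\pm^TP_\pm^{-1}Q_\pm-R_\pm\end{bmatrix}$, let $E^s(+\infty)$ be the spectral subspace of $JB(+\infty)$ for eigenvalues with negative real part and $E^u(-\infty)$ the spectral subspace of $JB(-\infty)$ for eigenvalues with positive real part. Then $\iota(E^u(-\infty),E^s(+\infty);L_D)=0$.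
   Context: $J=\begin{bmatrix}0&-I_n\\ I_n&0\end{bmatrix}$, $\omega(a,b)=\langle Ja,b\rangle$ on $\mathbb{R}^{2n}$, $L_D=\mathbb{R}^n\times\{0\}$. Triple index of Lagrangian subspaces $\alpha,\beta,\kappa$: let $\mathfrak Q(\alpha,\beta;\kappa)$ be the quadratic form on $\alpha\cap(\beta+\kappa)$ with $\mathfrak Q(x_1,x_2)=\omega(y_1,z_2)$ where $x_j=y_j+z_j$, $y_j\in\beta$, $z_j\in\kappa$; then $\iota(\alpha,\beta;\kappa)=\mathrm m^-(\mathfrak Q(\alpha,\delta;\beta))+\mathrm m^-(\mathfrak Q(\beta,\delta;\kappa))-\mathrm m^-(\mathfrak Q(\alpha,\delta;\kappa))$ for any Lagrangian $\delta$ transversal to $\alpha,\beta,\kappa$, where $\mathrm m^-$ is the negative inertia index. *)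

theory Defs
  imports "HOL-Analysis.Analysis"
begin

text \<open>Phase space R^{2n} is modelled as real^('n + 'n): the coordinates Inl i are the
  first n coordinates (q-part), the coordinates Inr i the last n coordinates.\<close>

type_synonym ('n) phase = "real ^ ('n + 'n)"

definition blockmat ::
  "real^'n^'n \<Rightarrow> real^'n^'n \<Rightarrow> real^'n^'n \<Rightarrow> real^'n^'n \<Rightarrow> real^('n+'n)^('n+'n)" where
  "blockmat A B C D = (\<chi> i j. case (i, j) of
      (Inl a, Inl b) \<Rightarrow> A $ a $ b
    | (Inl a, Inr b) \<Rightarrow> B $ a $ b
    | (Inr a, Inl b) \<Rightarrow> C $ a $ b
    | (Inr a, Inr b) \<Rightarrow> D $ a $ b)"

definition Jmat :: "real^('n::finite+'n)^('n+'n)" where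
  "Jmat = blockmat 0 (- mat 1) (mat 1) 0"

definition omega :: "real^('n::finite+'n) \<Rightarrow> real^('n+'n) \<Rightarrow> real" where
  "omega a b = (Jmat *v a) \<bullet> b"

definition LD :: "(real^('n::finite+'n)) set" where
  "LD = {x. \<forall>i. x $ Inr i = 0}"

definition symmetric_mat :: "real^'n^'n \<Rightarrow> bool" where
  "symmetric_mat A \<longleftrightarrow> transpose A = A"

definition pos_def :: "real^'n^'n \<Rightarrow> bool" where
  "pos_def A \<longleftrightarrow> symmetric_mat A \<and> (\<forall>x. x \<noteq> 0 \<longrightarrow> x \<bullet> (A *v x) > 0)"

definition lagrangian :: "(real^('n::finite+'n)) set \<Rightarrow> bool" where
  "lagrangian L \<longleftrightarrow> subspace L \<and> dim L = CARD('n) \<and> (\<forall>x\<in>L. \<forall>y\<in>L. omega x y = 0)"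

definition transversal :: "'a::real_vector set \<Rightarrow> 'a set \<Rightarrow> bool" where
  "transversal L M \<longleftrightarrow> L \<inter> M = {0}"

definition cvec :: "real^'m \<Rightarrow> complex^'m" where
  "cvec x = (\<chi> i. complex_of_real (x $ i))"

definition cmat :: "real^'m^'m \<Rightarrow> complex^'m^'m" where
  "cmat A = (\<chi> i j. complex_of_real (A $ i $ j))"

definition gen_eigenspace :: "complex^'m^'m \<Rightarrow> complex \<Rightarrow> (complex^'m) set" where
  "gen_eigenspace M lam = {v. ((\<lambda>w. (M - mat lam) *v w) ^^ CARD('m)) v = 0}"

definition spectral_subspace :: "real^'m^'m \<Rightarrow> complex set \<Rightarrow> (real^'m) set" where
  "spectral_subspace A S = {x. \<exists>F v. finite F \<and> F \<subseteq> S \<and>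
      (\<forall>lam\<in>F. v lam \<in> gen_eigenspace (cmat A) lam) \<and> cvec x = (\<Sum>lam\<in>F. v lam)}"

definition Es :: "real^'m^'m \<Rightarrow> (real^'m) set" where
  "Es A = spectral_subspace A {lam. Re lam < 0}"

definition Eu :: "real^'m^'m \<Rightarrow> (real^'m) set" where
  "Eu A = spectral_subspace A {lam. Re lam > 0}"

text \<open>Quadratic form Q(alpha,beta;kappa) evaluated on the diagonal, x = y + z, y in beta, z in kappa.\<close>
definition Qform :: "(real^('n::finite+'n)) set \<Rightarrow> (real^('n+'n)) set \<Rightarrow> real^('n+'n) \<Rightarrow> real" where
  "Qform beta kappa x = (let (y, z) = (SOME (y, z). y \<in> beta \<and> z \<in> kappa \<and> x = y + z) in omega y z)"

definition neg_index :: "(real^('n::finite+'n)) set \<Rightarrow> (real^('n+'n)) set \<Rightarrow> (real^('n+'n)) set \<Rightarrow> nat" where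
  "neg_index alpha beta kappa = Max {dim W | W. subspace W \<and> W \<subseteq> alpha \<inter> (beta + kappa) \<and>
      (\<forall>x\<in>W. x \<noteq> 0 \<longrightarrow> Qform beta kappa x < 0)}"

definition triple_index :: "(real^('n::finite+'n)) set \<Rightarrow> (real^('n+'n)) set \<Rightarrow> (real^('n+'n)) set \<Rightarrow> int" where
  "triple_index alpha beta kappa =
     (let delta = (SOME d. lagrangian d \<and> transversal d alpha \<and> transversal d beta \<and> transversal d kappa)
      in int (neg_index alpha delta beta) + int (neg_index beta delta kappa) - int (neg_index alpha delta kappa))"

end

theory Submission
  imports Defs "HOL-Computational_Algebra.Polynomial_Factorial"
    "HOL-Computational_Algebra.Fundamental_Theorem_Algebra" "HOL-Computational_Algebra.Field_as_Ring"
begin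

text \<open>
  Write phase-space vectors as \<open>(q, p)\<close> and let \<open>M = J B(\<infinity>)\<close>. Along \<open>y' = M y\<close> the
  derivative of \<open>F(q, p) = q \<bullet> p\<close> is the positive definite form \<open>[[P, Q], [Q\<^sup>T, R]]\<close>
  evaluated at \<open>(P\<^sup>-\<^sup>1 (q - Q p), p)\<close>. So \<open>F\<close> is a strict Lyapunov function: it is negative on
  \<open>E\<^sup>s \<setminus> 0\<close> (where trajectories tend to \<open>0\<close>, as do the Euler iterates used here in place of
  the exponential), positive on \<open>E\<^sup>u \<setminus> 0\<close>, and \<open>M\<close> has no imaginary eigenvalues. Generalised
  eigenvectors for \<open>\<lambda>, \<mu>\<close> with \<open>\<lambda> + \<mu> \<noteq> 0\<close> are \<open>\<omega>\<close>-orthogonal, so \<open>E\<^sup>s\<close> and \<open>E\<^sup>u\<close> are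
  isotropic complements, each of dimension at most \<open>n\<close> by the sign of \<open>F\<close>, hence Lagrangian.

  A Lagrangian on which \<open>F\<close> is definite is transversal to \<open>L\<^sub>D\<close> and so is the graph
  \<open>{(A p, p)}\<close> of a symmetric \<open>A\<close>; for \<open>\<alpha> = E\<^sup>u(-\<infinity>)\<close> and \<open>\<beta> = E\<^sup>s(+\<infinity>)\<close> this gives \<open>A > 0 > B\<close>.
  For any common transversal \<open>\<delta> = graph D\<close> the three negative indices in \<open>\<iota>(\<alpha>, \<beta>; L\<^sub>D)\<close> are
  those of \<open>X - X Y\<^sup>-\<^sup>1 X\<close>, \<open>Y\<close> and \<open>Y - X\<close> with \<open>X = A - B > 0\<close>, \<open>Y = D - B\<close>, and they cancel
  by the Schur complement identity.
\<close>

section \<open>Negative inertia index\<close>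

definition neg_inertia :: "('a::euclidean_space \<Rightarrow> real) \<Rightarrow> 'a set \<Rightarrow> nat" where
  "neg_inertia f V = Max {dim W | W. subspace W \<and> W \<subseteq> V \<and> (\<forall>x\<in>W. x \<noteq> 0 \<longrightarrow> f x < 0)}"

lemma neg_inertia_candidates_finite:
  "finite {dim W | W. subspace W \<and> W \<subseteq> (V::'a::euclidean_space set) \<and> (\<forall>x\<in>W. x \<noteq> 0 \<longrightarrow> f x < 0)}"
  by (rule finite_subset[of _ "{..DIM('a)}"]) (use dim_subset_UNIV in auto)

lemma neg_inertia_ge:
  assumes "subspace W" "W \<subseteq> V" "\<And>x. x \<in> W \<Longrightarrow> x \<noteq> 0 \<Longrightarrow> f x < 0"
  shows "dim W \<le> neg_inertia f V"
  unfolding neg_inertia_def by (rule Max_ge[OF neg_inertia_candidates_finite]) (use assms in blast)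

lemma neg_inertia_obtain:
  assumes "subspace V"
  obtains W where "subspace W" "W \<subseteq> V" "\<And>x. x \<in> W \<Longrightarrow> x \<noteq> 0 \<Longrightarrow> f x < 0"
    "dim W = neg_inertia f V"
proof -
  have ne: "{dim W | W. subspace W \<and> W \<subseteq> V \<and> (\<forall>x\<in>W. x \<noteq> 0 \<longrightarrow> f x < 0)} \<noteq> {}"
    using subspace_0[OF assms] by (auto intro!: exI[of _ "{0}"])
  show ?thesis
    using Max_in[OF neg_inertia_candidates_finite ne] that unfolding neg_inertia_def by auto
qed

lemma neg_inertia_linear_image:
  fixes L :: "'a::euclidean_space \<Rightarrow> 'b::euclidean_space"
  assumes lin: "linear L" and inj: "inj L" and fg: "\<And>x. f (L x) = g x"
  shows "neg_inertia f (range L) = neg_inertia g UNIV"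
proof -
  have L0: "L x = 0 \<longleftrightarrow> x = 0" for x
    using linear_injective_0[OF lin] inj linear_0[OF lin] by auto
  have dim_image: "dim (L ` W) = dim W" for W
    by (rule dim_image_eq[OF lin inj_on_subset[OF inj subset_UNIV]])
  show ?thesis
  proof (rule antisym)
    obtain W where W: "subspace W" "W \<subseteq> range L" "\<And>x. x \<in> W \<Longrightarrow> x \<noteq> 0 \<Longrightarrow> f x < 0"
      "dim W = neg_inertia f (range L)"
      by (rule neg_inertia_obtain[OF linear_subspace_image[OF lin subspace_UNIV], of f]) simp
    have "L ` (L -` W) = W" using W(2) by auto
    then have "dim W = dim (L -` W)" using dim_image[of "L -` W"] by simp
    moreover have "dim (L -` W) \<le> neg_inertia g UNIV"
    proof (rule neg_inertia_ge[OF linear_subspace_vimage[OF lin W(1)]])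
      fix x assume "x \<in> L -` W" "x \<noteq> 0"
      then show "g x < 0" using W(3)[of "L x"] fg[of x] L0[of x] by simp
    qed simp
    ultimately show "neg_inertia f (range L) \<le> neg_inertia g UNIV"
      using W(4) by linarith
  next
    obtain W where W: "subspace W" "\<And>x. x \<in> W \<Longrightarrow> x \<noteq> 0 \<Longrightarrow> g x < 0"
      "dim W = neg_inertia g UNIV"
      by (rule neg_inertia_obtain[OF subspace_UNIV, of g]) simp
    have "dim (L ` W) \<le> neg_inertia f (range L)"
    proof (rule neg_inertia_ge[OF linear_subspace_image[OF lin W(1)]])
      fix y assume "y \<in> L ` W" "y \<noteq> 0"
      then show "f y < 0" using W(2) fg L0 by auto
    qed auto
    then show "neg_inertia g UNIV \<le> neg_inertia f (range L)"
      using W(3) dim_image[of W] by simp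
  qed
qed

lemma dim_add_le_if_neg_nonneg:
  fixes W N :: "'a::euclidean_space set" and f :: "'a \<Rightarrow> real"
  assumes "subspace W" "subspace N" "\<And>x. x \<in> W \<Longrightarrow> x \<noteq> 0 \<Longrightarrow> f x < 0"
    "\<And>x. x \<in> N \<Longrightarrow> 0 \<le> f x"
  shows "dim W + dim N \<le> DIM('a)"
proof -
  have "W \<inter> N = {0}"
  proof (intro equalityI subsetI)
    fix x assume "x \<in> W \<inter> N"
    then show "x \<in> {0}" using assms(3)[of x] assms(4)[of x] by (cases "x = 0") auto
  qed (use subspace_0[OF assms(1)] subspace_0[OF assms(2)] in auto)
  then have "dim {x + y |x y. x \<in> W \<and> y \<in> N} = dim W + dim N"
    using dim_sums_Int[OF assms(1,2)] by simp
  then show ?thesis using dim_subset_UNIV[of "{x + y |x y. x \<in> W \<and> y \<in> N}"] by simp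
qed

definition self_adjoint :: "('a::euclidean_space \<Rightarrow> 'a) \<Rightarrow> bool" where
  "self_adjoint L \<longleftrightarrow> linear L \<and> (\<forall>x y. x \<bullet> L y = L x \<bullet> y)"

lemma self_adjointD:
  assumes "self_adjoint L"
  shows "linear L" and "x \<bullet> L y = L x \<bullet> y"
  using assms unfolding self_adjoint_def by simp_all

lemma neg_on_span_insert_if_L_orthogonal:
  assumes "self_adjoint L" "subspace W" "\<And>x. x \<in> W \<Longrightarrow> x \<noteq> 0 \<Longrightarrow> x \<bullet> L x < 0"
    and orth: "\<And>w. w \<in> W \<Longrightarrow> L w \<bullet> y = 0" and neg: "y \<bullet> L y < 0"
    and z: "z \<in> span (insert y W)" "z \<noteq> 0"
  shows "z \<bullet> L z < 0"
proof -
  note lin = self_adjointD(1)[OF assms(1)] and sym = self_adjointD(2)[OF assms(1)]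
  have spanW: "span W = W" using assms(2) by (simp add: span_eq_iff)
  obtain k where "z - k *\<^sub>R y \<in> W"
    using z(1) unfolding span_insert[of y W] spanW by auto
  then obtain w where w: "w \<in> W" and zw: "z = w + k *\<^sub>R y"
    by (metis diff_add_cancel)
  have "y \<bullet> L w = 0" "w \<bullet> L y = 0"
    using orth[OF w] sym[of w y] by (simp_all add: inner_commute)
  then have "z \<bullet> L z = w \<bullet> L w + k * k * (y \<bullet> L y)"
    unfolding zw linear_add[OF lin] linear_scale[OF lin]
    by (simp add: inner_add_left inner_add_right algebra_simps)
  moreover have "w \<bullet> L w \<le> 0" using assms(3)[OF w] by (cases "w = 0") auto
  moreover have "k * k * (y \<bullet> L y) < 0" if "k \<noteq> 0"
  proof -
    have "0 < k * k" using that by (auto simp: zero_less_mult_iff linorder_neq_iff)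
    then show ?thesis using neg by (simp add: mult_pos_neg)
  qed
  moreover have "k \<noteq> 0 \<or> w \<noteq> 0" using z(2) zw by auto
  ultimately show ?thesis using assms(3)[OF w] by (cases "k = 0") auto
qed

text \<open>The orthogonal complement of \<open>L ` W\<close> for a maximal negative subspace \<open>W\<close> is a
  non-negative complement: a negative vector there could be added to \<open>W\<close>.\<close>

lemma neg_inertia_nonneg_complement:
  fixes L :: "'a::euclidean_space \<Rightarrow> 'a"
  assumes "self_adjoint L"
  obtains N where "subspace N" "\<And>x. x \<in> N \<Longrightarrow> 0 \<le> x \<bullet> L x"
    "DIM('a) \<le> dim N + neg_inertia (\<lambda>x. x \<bullet> L x) UNIV"
proof -
  note lin = self_adjointD(1)[OF assms]
  let ?f = "\<lambda>x. x \<bullet> L x"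
  obtain W where W: "subspace W" "\<And>x. x \<in> W \<Longrightarrow> x \<noteq> 0 \<Longrightarrow> ?f x < 0"
    "dim W = neg_inertia ?f UNIV"
    by (rule neg_inertia_obtain[OF subspace_UNIV, of ?f]) simp
  let ?N = "{y. \<forall>x\<in>L ` W. orthogonal x y}"
  have "dim {y \<in> UNIV. \<forall>x \<in> L ` W. orthogonal x y} + dim (L ` W) = DIM('a)"
    using dim_subspace_orthogonal_to_vectors[OF linear_subspace_image[OF lin W(1)] subspace_UNIV]
    by simp
  then have dimN: "DIM('a) \<le> dim ?N + neg_inertia ?f UNIV"
    using dim_image_le[OF lin, of W] W(3) by simp
  have "0 \<le> ?f y" if y: "y \<in> ?N" for y
  proof (rule ccontr)
    assume "\<not> 0 \<le> ?f y"
    then have neg: "?f y < 0" by simp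
    have orth: "L w \<bullet> y = 0" if "w \<in> W" for w
      using y that unfolding orthogonal_def by auto
    have "dim (span (insert y W)) \<le> neg_inertia ?f UNIV"
      by (rule neg_inertia_ge)
        (auto intro: neg_on_span_insert_if_L_orthogonal[OF assms W(1,2) orth neg])
    moreover have "y \<notin> W" using W(2)[of y] orth[of y] neg by (auto simp: inner_commute)
    then have "dim (span (insert y W)) = dim W + 1"
      using W(1) by (simp add: dim_insert span_eq_iff[THEN iffD2])
    ultimately show False using W(3) by simp
  qed
  then show ?thesis
    using that[OF subspace_orthogonal_to_vectors _ dimN] by blast
qed

lemma neg_inertia_sum_le:
  fixes L1 :: "'a::euclidean_space \<Rightarrow> 'a" and L2 :: "'b::euclidean_space \<Rightarrow> 'b"
  assumes sa1: "self_adjoint L1" and sa2: "self_adjoint L2"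
  shows "neg_inertia (\<lambda>z. fst z \<bullet> L1 (fst z) + snd z \<bullet> L2 (snd z)) UNIV
       \<le> neg_inertia (\<lambda>x. x \<bullet> L1 x) UNIV + neg_inertia (\<lambda>x. x \<bullet> L2 x) UNIV"
    (is "neg_inertia ?h UNIV \<le> neg_inertia ?f1 UNIV + neg_inertia ?f2 UNIV")
proof -
  obtain N1 where N1: "subspace N1" "\<And>x. x \<in> N1 \<Longrightarrow> 0 \<le> ?f1 x"
    "DIM('a) \<le> dim N1 + neg_inertia ?f1 UNIV"
    by (rule neg_inertia_nonneg_complement[OF sa1]) simp
  obtain N2 where N2: "subspace N2" "\<And>x. x \<in> N2 \<Longrightarrow> 0 \<le> ?f2 x"
    "DIM('b) \<le> dim N2 + neg_inertia ?f2 UNIV"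
    by (rule neg_inertia_nonneg_complement[OF sa2]) simp
  obtain W where W: "subspace W" "\<And>z. z \<in> W \<Longrightarrow> z \<noteq> 0 \<Longrightarrow> ?h z < 0"
    "dim W = neg_inertia ?h UNIV"
    by (rule neg_inertia_obtain[OF subspace_UNIV, of ?h]) simp
  have "dim W + dim (N1 \<times> N2) \<le> DIM('a \<times> 'b)"
  proof (rule dim_add_le_if_neg_nonneg[OF W(1) subspace_Times[OF N1(1) N2(1)] W(2)])
    fix z assume "z \<in> N1 \<times> N2"
    then show "0 \<le> ?h z" using N1(2)[of "fst z"] N2(2)[of "snd z"] by (cases z) simp
  qed
  then show ?thesis
    using N1(3) N2(3) W(3) dim_Times[OF N1(1) N2(1)] by (simp add: DIM_prod)
qed

lemma neg_inertia_sum_ge: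
  fixes L1 :: "'a::euclidean_space \<Rightarrow> 'a" and L2 :: "'b::euclidean_space \<Rightarrow> 'b"
  shows "neg_inertia (\<lambda>x. x \<bullet> L1 x) UNIV + neg_inertia (\<lambda>x. x \<bullet> L2 x) UNIV
       \<le> neg_inertia (\<lambda>z. fst z \<bullet> L1 (fst z) + snd z \<bullet> L2 (snd z)) UNIV"
    (is "neg_inertia ?f1 UNIV + neg_inertia ?f2 UNIV \<le> neg_inertia ?h UNIV")
proof -
  obtain W1 where W1: "subspace W1" "\<And>x. x \<in> W1 \<Longrightarrow> x \<noteq> 0 \<Longrightarrow> ?f1 x < 0"
    "dim W1 = neg_inertia ?f1 UNIV"
    by (rule neg_inertia_obtain[OF subspace_UNIV, of ?f1]) simp
  obtain W2 where W2: "subspace W2" "\<And>x. x \<in> W2 \<Longrightarrow> x \<noteq> 0 \<Longrightarrow> ?f2 x < 0"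
    "dim W2 = neg_inertia ?f2 UNIV"
    by (rule neg_inertia_obtain[OF subspace_UNIV, of ?f2]) simp
  have "dim (W1 \<times> W2) \<le> neg_inertia ?h UNIV"
  proof (rule neg_inertia_ge[OF subspace_Times[OF W1(1) W2(1)]])
    fix z assume z: "z \<in> W1 \<times> W2" "z \<noteq> 0"
    obtain a b where zab: "z = (a, b)" by (cases z)
    have a: "a \<in> W1" and b: "b \<in> W2" using z zab by auto
    have "?f1 a \<le> 0" using W1(2)[OF a] by (cases "a = 0") (auto simp: less_imp_le)
    moreover have "?f2 b \<le> 0" using W2(2)[OF b] by (cases "b = 0") (auto simp: less_imp_le)
    moreover have "a \<noteq> 0 \<or> b \<noteq> 0" using z zab by (auto simp: zero_prod_def)
    ultimately show "?h z < 0" using W1(2)[OF a] W2(2)[OF b] zab by auto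
  qed auto
  then show ?thesis using dim_Times[OF W1(1) W2(1)] W1(3) W2(3) by simp
qed

lemma neg_inertia_sum:
  fixes L1 :: "'a::euclidean_space \<Rightarrow> 'a" and L2 :: "'b::euclidean_space \<Rightarrow> 'b"
  assumes "self_adjoint L1" "self_adjoint L2"
  shows "neg_inertia (\<lambda>z. fst z \<bullet> L1 (fst z) + snd z \<bullet> L2 (snd z)) UNIV
       = neg_inertia (\<lambda>x. x \<bullet> L1 x) UNIV + neg_inertia (\<lambda>x. x \<bullet> L2 x) UNIV"
  using neg_inertia_sum_le[OF assms] neg_inertia_sum_ge[of L1 L2] by (rule antisym)

lemma neg_inertia_congruent_sum:
  fixes T :: "'a::euclidean_space \<times> 'b::euclidean_space \<Rightarrow> 'a \<times> 'b"
  assumes "linear T" "bij T" "self_adjoint L1" "self_adjoint L2"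
    and "\<And>z. f (T z) = fst z \<bullet> L1 (fst z) + snd z \<bullet> L2 (snd z)"
  shows "neg_inertia f UNIV = neg_inertia (\<lambda>x. x \<bullet> L1 x) UNIV + neg_inertia (\<lambda>x. x \<bullet> L2 x) UNIV"
proof -
  have "range T = UNIV" using bij_is_surj[OF assms(2)] .
  then have "neg_inertia f UNIV = neg_inertia (\<lambda>z. fst z \<bullet> L1 (fst z) + snd z \<bullet> L2 (snd z)) UNIV"
    using neg_inertia_linear_image[of T f, OF assms(1) bij_is_inj[OF assms(2)] assms(5)] by simp
  then show ?thesis unfolding neg_inertia_sum[OF assms(3,4)] .
qed

section \<open>Symmetric matrices and the Schur complement\<close>

abbreviation quad_form :: "real^'n^'n \<Rightarrow> real^'n \<Rightarrow> real" where
  "quad_form S x \<equiv> x \<bullet> (S *v x)"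

lemma symmetric_mat_inner: "symmetric_mat S \<Longrightarrow> x \<bullet> (S *v y) = (S *v x) \<bullet> y"
  unfolding symmetric_mat_def by (metis dot_lmul_matrix vector_transpose_matrix)

lemma self_adjoint_symmetric_mat: "symmetric_mat S \<Longrightarrow> self_adjoint ((*v) S)"
  by (simp add: self_adjoint_def symmetric_mat_inner matrix_vector_mul_linear)

lemma transpose_diff: "transpose (A - B) = transpose A - transpose (B::real^'n^'m)"
  by (simp add: transpose_def vec_eq_iff)

lemma transpose_uminus: "transpose (- A) = - transpose (A::real^'n^'m)"
  by (simp add: transpose_def vec_eq_iff)

lemma matrix_vector_mult_uminus: "(- A) *v x = - (A *v x)" for A :: "'a::ring_1^'n^'m"
  by (simp add: matrix_vector_mult_def vec_eq_iff sum_negf)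

lemma symmetric_mat_diff: "symmetric_mat A \<Longrightarrow> symmetric_mat B \<Longrightarrow> symmetric_mat (A - B)"
  unfolding symmetric_mat_def by (simp add: transpose_diff)

lemma matrix_inv_right:
  assumes "invertible (A::real^'n^'n)"
  shows "A ** matrix_inv A = mat 1"
  using someI_ex[OF assms[unfolded invertible_def]] unfolding matrix_inv_def by auto

lemma matrix_inv_mult_vec: "invertible (A::real^'n^'n) \<Longrightarrow> A *v (matrix_inv A *v v) = v"
  by (simp add: matrix_vector_mul_assoc matrix_inv_right)

lemma symmetric_mat_matrix_inv:
  assumes "invertible (A::real^'n^'n)" "symmetric_mat A"
  shows "symmetric_mat (matrix_inv A)"
proof -
  let ?B = "matrix_inv A"
  have "transpose ?B ** A = mat 1"
    using arg_cong[OF matrix_inv_right[OF assms(1)], of transpose] assms(2)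
    by (simp add: matrix_transpose_mul symmetric_mat_def)
  then have "transpose ?B = ?B"
    using matrix_inv_right[OF assms(1)] by (metis matrix_mul_assoc matrix_mul_lid matrix_mul_rid)
  then show ?thesis unfolding symmetric_mat_def .
qed

lemma symmetric_mat_sandwich:
  "symmetric_mat X \<Longrightarrow> symmetric_mat Y \<Longrightarrow> symmetric_mat (X ** Y ** X)"
  unfolding symmetric_mat_def by (simp add: matrix_transpose_mul matrix_mul_assoc)

lemma invertible_if_pos_def:
  assumes "pos_def P"
  shows "invertible P"
proof -
  have "inj ((*v) P)"
    unfolding vec.inj_iff_eq_0 using assms unfolding pos_def_def by force
  then show ?thesis
    using matrix_left_invertible_injective invertible_left_inverse by blast
qed

lemma neg_inertia_pos_def:
  assumes "pos_def X"
  shows "neg_inertia (quad_form X) UNIV = 0"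
proof -
  obtain W where W: "subspace W" "\<And>x. x \<in> W \<Longrightarrow> x \<noteq> 0 \<Longrightarrow> quad_form X x < 0"
    "dim W = neg_inertia (quad_form X) UNIV"
    by (rule neg_inertia_obtain[OF subspace_UNIV, of "quad_form X"]) simp
  have "W \<subseteq> {0}" using W(2) assms unfolding pos_def_def by force
  then show ?thesis using W(3) dim_eq_0[of W] by simp
qed

text \<open>The quadratic form of the block matrix \<open>[[X, -X], [-X, Y]]\<close>; the two shears below
  diagonalise it in two ways.\<close>

definition schur_form :: "real^'n^'n \<Rightarrow> real^'n^'n \<Rightarrow> (real^'n) \<times> (real^'n) \<Rightarrow> real" where
  "schur_form X Y z = quad_form X (fst z) - 2 * (fst z \<bullet> (X *v snd z)) + quad_form Y (snd z)"

lemma schur_form_shear_fst: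
  assumes "symmetric_mat X"
  shows "schur_form X Y (a + w, w) = quad_form X a + quad_form (Y - X) w"
  using symmetric_mat_inner[OF assms, of w a]
  by (simp add: schur_form_def matrix_vector_right_distrib inner_add_left inner_add_right
      matrix_vector_mult_diff_rdistrib inner_diff_right inner_commute)

lemma schur_form_shear_snd:
  assumes Xs: "symmetric_mat X" and Ys: "symmetric_mat Y" and Yi: "invertible Y"
  shows "schur_form X Y (a, w + matrix_inv Y *v (X *v a))
    = quad_form (X - X ** matrix_inv Y ** X) a + quad_form Y w"
proof -
  define b where "b = matrix_inv Y *v (X *v a)"
  have Yb: "Y *v b = X *v a" unfolding b_def by (rule matrix_inv_mult_vec[OF Yi])
  have XwA: "w \<bullet> (X *v a) = a \<bullet> (X *v w)" for a w
    using symmetric_mat_inner[OF Xs, of w a] by (simp add: inner_commute)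
  have "w \<bullet> (Y *v b) = a \<bullet> (X *v w)" "b \<bullet> (Y *v b) = a \<bullet> (X *v b)"
    using Yb XwA[of a w] XwA[of a b] by simp_all
  moreover have "b \<bullet> (Y *v w) = a \<bullet> (X *v w)"
    using symmetric_mat_inner[OF Ys, of b w] Yb XwA[of a w] inner_commute[of "X *v a" w] by simp
  moreover have "(X - X ** matrix_inv Y ** X) *v a = X *v a - X *v b"
    unfolding b_def by (simp add: matrix_vector_mult_diff_rdistrib matrix_vector_mul_assoc matrix_mul_assoc)
  ultimately show ?thesis
    unfolding b_def[symmetric] schur_form_def
    by (simp add: matrix_vector_right_distrib inner_add_left inner_add_right inner_diff_right)
qed

lemma neg_inertia_schur_complement:
  fixes X Y :: "real^'n^'n"
  assumes X: "pos_def X" and Ys: "symmetric_mat Y" and Yi: "invertible Y"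
  shows "neg_inertia (quad_form (X - X ** matrix_inv Y ** X)) UNIV + neg_inertia (quad_form Y) UNIV
    = neg_inertia (quad_form (Y - X)) UNIV"
proof -
  let ?Yi = "matrix_inv Y"
  have Xs: "symmetric_mat X" using X unfolding pos_def_def by simp
  have Zs: "symmetric_mat (X - X ** ?Yi ** X)"
    by (rule symmetric_mat_diff[OF Xs symmetric_mat_sandwich[OF Xs symmetric_mat_matrix_inv[OF Yi Ys]]])
  have "neg_inertia (schur_form X Y) UNIV
    = neg_inertia (quad_form X) UNIV + neg_inertia (quad_form (Y - X)) UNIV"
  proof (rule neg_inertia_congruent_sum[of "\<lambda>(a, w). (a + w, w)"])
    show "linear (\<lambda>(a, w). (a + w, w :: real^'n))"
      by (rule linearI) (auto simp: algebra_simps)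
    show "bij (\<lambda>(a, w). (a + w, w :: real^'n))"
      by (rule o_bij[of "\<lambda>(a, w). (a - w, w)"]) auto
  qed (use self_adjoint_symmetric_mat Xs symmetric_mat_diff[OF Ys Xs] schur_form_shear_fst[OF Xs]
      in auto)
  moreover have "neg_inertia (schur_form X Y) UNIV
    = neg_inertia (quad_form (X - X ** ?Yi ** X)) UNIV + neg_inertia (quad_form Y) UNIV"
  proof (rule neg_inertia_congruent_sum[of "\<lambda>(a, w). (a, w + ?Yi *v (X *v a))"])
    show "linear (\<lambda>(a, w). (a, w + ?Yi *v (X *v a)))"
      by (rule linearI) (auto simp: algebra_simps matrix_vector_right_distrib matrix_vector_mult_scaleR)
    show "bij (\<lambda>(a, w). (a, w + ?Yi *v (X *v a)))"
      by (rule o_bij[of "\<lambda>(a, w). (a, w - ?Yi *v (X *v a))"]) auto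
  qed (use self_adjoint_symmetric_mat Zs Ys schur_form_shear_snd[OF Xs Ys Yi] in auto)
  ultimately show ?thesis using neg_inertia_pos_def[OF X] by simp
qed

section \<open>Phase space coordinates\<close>

definition qv :: "real^('n::finite+'n) \<Rightarrow> real^'n" where
  "qv x = (\<chi> i. x $ Inl i)"

definition pv :: "real^('n::finite+'n) \<Rightarrow> real^'n" where
  "pv x = (\<chi> i. x $ Inr i)"

definition qp_vec :: "real^'n \<Rightarrow> real^'n \<Rightarrow> real^('n::finite+'n)" where
  "qp_vec q p = (\<chi> j. case j of Inl i \<Rightarrow> q $ i | Inr i \<Rightarrow> p $ i)"

lemma qv_qp_vec [simp]: "qv (qp_vec q p) = q" and pv_qp_vec [simp]: "pv (qp_vec q p) = p"
  by (simp_all add: qv_def pv_def qp_vec_def vec_eq_iff)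

lemma qp_vec_qv_pv [simp]: "qp_vec (qv x) (pv x) = x"
  by (simp add: qv_def pv_def qp_vec_def vec_eq_iff split: sum.split)

lemma qp_vec_eq_iff: "qp_vec q p = qp_vec q' p' \<longleftrightarrow> q = q' \<and> p = p'"
  by (metis qv_qp_vec pv_qp_vec)

lemma qp_vec_add: "qp_vec q p + qp_vec q' p' = qp_vec (q + q') (p + p')"
  and qp_vec_scaleR: "c *\<^sub>R qp_vec q p = qp_vec (c *\<^sub>R q) (c *\<^sub>R p)"
  and qp_vec_uminus: "- qp_vec q p = qp_vec (- q) (- p)"
  and qp_vec_0: "qp_vec 0 0 = 0"
  by (simp_all add: qp_vec_def vec_eq_iff split: sum.split)

lemma qp_vec_eq_0_iff: "qp_vec q p = 0 \<longleftrightarrow> q = 0 \<and> p = 0"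
  by (metis qp_vec_eq_iff qp_vec_0)

lemma qv_add: "qv (x + y) = qv x + qv y" and pv_add: "pv (x + y) = pv x + pv y"
  and qv_scaleR: "qv (c *\<^sub>R x) = c *\<^sub>R qv x" and pv_scaleR: "pv (c *\<^sub>R x) = c *\<^sub>R pv x"
  by (simp_all add: qv_def pv_def vec_eq_iff)

lemma pv_0 [simp]: "pv 0 = 0"
  by (simp add: pv_def vec_eq_iff)

lemma linear_qv: "linear qv" and linear_pv: "linear pv"
  by (simp_all add: linearI qv_add qv_scaleR pv_add pv_scaleR)

lemma sum_UNIV_Plus:
  "(\<Sum>j\<in>(UNIV::('a::finite + 'b::finite) set). f j) = (\<Sum>i\<in>UNIV. f (Inl i)) + (\<Sum>i\<in>UNIV. f (Inr i))"
  using sum.Plus[of "UNIV::'a set" "UNIV::'b set" f] by (simp add: UNIV_Plus_UNIV comp_def)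

lemma inner_qv_pv: "x \<bullet> y = qv x \<bullet> qv y + pv x \<bullet> pv y"
  by (simp add: inner_vec_def sum_UNIV_Plus qv_def pv_def)

lemma inner_qp_vec: "qp_vec a b \<bullet> qp_vec c d = a \<bullet> c + b \<bullet> d"
  using inner_qv_pv[of "qp_vec a b"] by simp

lemma blockmat_qp_vec:
  "blockmat A B C D *v qp_vec q p = qp_vec (A *v q + B *v p) (C *v q + D *v p)"
  unfolding vec_eq_iff
  by (auto simp: matrix_vector_mult_def blockmat_def qp_vec_def sum_UNIV_Plus split: sum.split)

lemma Jmat_qp_vec: "Jmat *v qp_vec q p = qp_vec (- p) q"
  by (simp add: Jmat_def blockmat_qp_vec matrix_vector_mult_uminus)

lemma omega_qp_vec: "omega (qp_vec q1 p1) (qp_vec q2 p2) = q1 \<bullet> p2 - p1 \<bullet> q2"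
  unfolding omega_def Jmat_qp_vec inner_qp_vec by simp

lemma mem_LD_iff: "x \<in> LD \<longleftrightarrow> pv x = 0"
  by (simp add: LD_def pv_def vec_eq_iff)

section \<open>Lagrangian graphs and the triple index\<close>

definition graph_mat :: "real^'n^'n \<Rightarrow> (real^('n::finite+'n)) set" where
  "graph_mat A = range (\<lambda>p. qp_vec (A *v p) p)"

lemma linear_graph_map: "linear (\<lambda>p. qp_vec (A *v p) p)"
  by (rule linearI) (simp_all add: qp_vec_add qp_vec_scaleR matrix_vector_right_distrib
      matrix_vector_mult_scaleR)

lemma inj_graph_map: "inj (\<lambda>p. qp_vec (A *v p) p)"
  by (rule injI) (simp add: qp_vec_eq_iff)

lemma qp_vec_in_graph_mat: "qp_vec (A *v p) p \<in> graph_mat A"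
  unfolding graph_mat_def by blast

lemma subspace_graph_mat: "subspace (graph_mat A)"
  unfolding graph_mat_def by (rule linear_subspace_image[OF linear_graph_map subspace_UNIV])

lemma dim_graph_mat: "dim (graph_mat (A::real^'n^'n)) = CARD('n)"
  unfolding graph_mat_def
  by (subst dim_image_eq[OF linear_graph_map inj_on_subset[OF inj_graph_map subset_UNIV]]) simp

lemma subspace_LD: "subspace LD"
  by (auto simp: subspace_def mem_LD_iff pv_add pv_scaleR)

lemma graph_mat_Int_LD: "graph_mat A \<inter> LD = {0}"
  unfolding graph_mat_def by (auto simp: mem_LD_iff qp_vec_0 intro!: image_eqI[of _ _ 0])

lemma graph_mat_Int_graph_mat:
  "graph_mat D \<inter> graph_mat A = {0} \<longleftrightarrow> (\<forall>p. D *v p = A *v p \<longrightarrow> p = 0)"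
proof
  assume DA: "graph_mat D \<inter> graph_mat A = {0}"
  show "\<forall>p. D *v p = A *v p \<longrightarrow> p = 0"
  proof (intro allI impI)
    fix p assume "D *v p = A *v p"
    then have "qp_vec (D *v p) p \<in> graph_mat D \<inter> graph_mat A"
      using qp_vec_in_graph_mat[of D p] qp_vec_in_graph_mat[of A p] by simp
    then show "p = 0" using DA by (simp add: qp_vec_eq_0_iff)
  qed
next
  assume "\<forall>p. D *v p = A *v p \<longrightarrow> p = 0"
  then show "graph_mat D \<inter> graph_mat A = {0}"
    using subspace_0[OF subspace_graph_mat] unfolding graph_mat_def
    by (auto simp: qp_vec_eq_iff qp_vec_0)
qed

lemma symmetric_mat_if_inner_sym:
  assumes "\<And>u v. (A *v u) \<bullet> v = u \<bullet> (A *v v)"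
  shows "symmetric_mat (A::real^'n^'n)"
proof -
  have "A $ i $ j = A $ j $ i" for i j
    using assms[of "axis j 1" "axis i 1"]
    by (simp add: inner_axis inner_axis' matrix_vector_mult_basis column_def)
  then show ?thesis unfolding symmetric_mat_def by (simp add: transpose_def vec_eq_iff)
qed

lemma lagrangian_graph_mat:
  assumes "symmetric_mat A"
  shows "lagrangian (graph_mat A)"
  unfolding lagrangian_def graph_mat_def
  using subspace_graph_mat[of A] dim_graph_mat[of A] symmetric_mat_inner[OF assms]
  by (auto simp: graph_mat_def omega_qp_vec inner_commute)

text \<open>Conversely, a Lagrangian \<open>L\<close> transversal to \<open>L\<^sub>D\<close> projects isomorphically onto the
  momentum space, and the \<open>q\<close>-part of the inverse of this projection is the matrix \<open>A\<close>.\<close>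

lemma lagrangian_obtain_graph_mat:
  fixes L :: "(real^('n::finite+'n)) set"
  assumes L: "lagrangian L" and T: "L \<inter> LD = {0}"
  obtains A where "symmetric_mat A" "L = graph_mat A"
proof -
  have sL: "subspace L" and dL: "dim L = CARD('n)"
    and iso: "\<And>x y. x \<in> L \<Longrightarrow> y \<in> L \<Longrightarrow> omega x y = 0"
    using L unfolding lagrangian_def by auto
  have inj: "inj_on pv L"
    using T subspace_diff[OF sL] unfolding inj_on_def
    by (metis (no_types, lifting) IntI diff_eq_diff_eq diff_self linear_diff[OF linear_pv]
        mem_LD_iff singletonD)
  have "dim (pv ` L) = DIM(real^'n)"
    using dim_image_eq[OF linear_pv, of L, unfolded span_eq_iff[THEN iffD2, OF sL]] inj dL
    by simp
  then have "pv ` L = UNIV"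
    using dim_eq_full span_eq_iff linear_subspace_image[OF linear_pv sL] by metis
  then obtain g where gL: "\<And>p. g p \<in> L" and lin_g: "linear g" and pg: "\<And>p. pv (g p) = p"
    using real_vector.linear_exists_right_inverse_on[OF linear_pv sL] by auto
  define A where "A = matrix (qv \<circ> g)"
  have g_eq: "g p = qp_vec (A *v p) p" for p
    using qp_vec_qv_pv[of "g p"] pg[of p] linear_compose[OF lin_g linear_qv]
    by (simp add: A_def matrix_vector_mul(2))
  have "L = graph_mat A"
  proof (intro equalityI subsetI)
    fix x assume "x \<in> L"
    then have "x = g (pv x)" using inj gL pg by (metis inj_on_def)
    then show "x \<in> graph_mat A" by (metis g_eq qp_vec_in_graph_mat)
  qed (auto simp: graph_mat_def g_eq[symmetric] gL)
  moreover have "symmetric_mat A"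
    using iso[OF gL gL] by (intro symmetric_mat_if_inner_sym) (simp add: g_eq omega_qp_vec)
  ultimately show ?thesis using that by blast
qed

lemma Qform_eq_omega:
  assumes "subspace S" "subspace T" "S \<inter> T = {0}" "y \<in> S" "z \<in> T"
  shows "Qform S T (y + z) = omega y z"
proof -
  let ?P = "\<lambda>(y', z'). y' \<in> S \<and> z' \<in> T \<and> y + z = y' + z'"
  obtain y' z' where w: "(SOME w. ?P w) = (y', z')" by (cases "SOME w. ?P w")
  have P: "?P (y', z')" using someI_ex[of ?P] assms(4,5) unfolding w by auto
  then have "y - y' = z' - z" by (auto simp: algebra_simps)
  moreover have "y - y' \<in> S" "z' - z \<in> T" using P assms by (auto intro: subspace_diff)
  ultimately have "y - y' \<in> S \<inter> T" by simp
  then have "y = y'" "z = z'" using assms(3) \<open>y - y' = z' - z\<close> by auto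
  then show ?thesis unfolding Qform_def w by simp
qed

lemma neg_index_eq_neg_inertia: "neg_index a b c = neg_inertia (Qform b c) (a \<inter> (b + c))"
  by (simp add: neg_index_def neg_inertia_def)

lemma neg_index_graph_mat:
  assumes "graph_mat A \<subseteq> \<beta> + \<kappa>" "\<And>p. Qform \<beta> \<kappa> (qp_vec (A *v p) p) = g p"
  shows "neg_index (graph_mat A) \<beta> \<kappa> = neg_inertia g UNIV"
  unfolding neg_index_eq_neg_inertia Int_absorb2[OF assms(1)] unfolding graph_mat_def
  by (rule neg_inertia_linear_image[of "\<lambda>p. qp_vec (A *v p) p" "Qform \<beta> \<kappa>" g,
        OF linear_graph_map inj_graph_map assms(2)])

lemma neg_index_graph_mat_LD:
  "neg_index (graph_mat A) (graph_mat D) LD = neg_inertia (quad_form (D - A)) UNIV"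
proof (rule neg_index_graph_mat)
  have split: "qp_vec (A *v p) p = qp_vec (D *v p) p + qp_vec ((A - D) *v p) 0" for p
    by (simp add: qp_vec_add matrix_vector_mult_diff_rdistrib)
  have LD: "qp_vec q 0 \<in> LD" for q by (simp add: mem_LD_iff)
  show "graph_mat A \<subseteq> graph_mat D + LD"
    unfolding graph_mat_def using split by (auto intro!: set_plus_intro LD qp_vec_in_graph_mat)
  show "Qform (graph_mat D) LD (qp_vec (A *v p) p) = quad_form (D - A) p" for p
    unfolding split
    by (simp add: Qform_eq_omega[OF subspace_graph_mat subspace_LD graph_mat_Int_LD
          qp_vec_in_graph_mat LD] omega_qp_vec matrix_vector_mult_diff_rdistrib inner_diff_right)
qed

lemma graph_mat_Int_graph_mat_if_invertible:
  assumes "invertible (D - B)"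
  shows "graph_mat D \<inter> graph_mat B = {0}"
  unfolding graph_mat_Int_graph_mat
proof (intro allI impI)
  fix q assume "D *v q = B *v q"
  then have "(D - B) *v q = (D - B) *v 0" by (simp add: matrix_vector_mult_diff_rdistrib)
  then show "q = 0" by (rule injD[OF inj_matrix_vector_mult[OF assms]])
qed

lemma qp_vec_graph_mat_split:
  fixes A B D :: "real^'n^'n" and p :: "real^'n"
  assumes "invertible (D - B)"
  defines "u \<equiv> matrix_inv (D - B) *v ((A - B) *v p)"
  shows "qp_vec (A *v p) p = qp_vec (D *v u) u + qp_vec (B *v (p - u)) (p - u)"
proof -
  have "(D - B) *v u = (A - B) *v p" unfolding u_def by (rule matrix_inv_mult_vec[OF assms(1)])
  then have "D *v u = A *v p - B *v p + B *v u"
    by (simp add: matrix_vector_mult_diff_rdistrib diff_eq_eq)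
  then show ?thesis by (simp add: qp_vec_add matrix_vector_mult_diff_distrib)
qed

lemma Qform_graph_mat_graph_mat:
  assumes Bs: "symmetric_mat B" and Ds: "symmetric_mat D" and Xs: "symmetric_mat (A - B)"
    and Yi: "invertible (D - B)"
  shows "Qform (graph_mat D) (graph_mat B) (qp_vec (A *v p) p)
    = quad_form ((A - B) - (A - B) ** matrix_inv (D - B) ** (A - B)) p"
proof -
  define X Y where "X = A - B" and "Y = D - B"
  define u where "u = matrix_inv Y *v (X *v p)"
  have Ys: "symmetric_mat Y" unfolding Y_def by (rule symmetric_mat_diff[OF Ds Bs])
  have Yu: "Y *v u = X *v p" unfolding u_def Y_def by (rule matrix_inv_mult_vec[OF Yi])
  have "Qform (graph_mat D) (graph_mat B) (qp_vec (A *v p) p) = u \<bullet> (Y *v (p - u))"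
    unfolding qp_vec_graph_mat_split[OF Yi, of A p, folded X_def Y_def, folded u_def]
      Qform_eq_omega[OF subspace_graph_mat subspace_graph_mat
        graph_mat_Int_graph_mat_if_invertible[OF Yi] qp_vec_in_graph_mat qp_vec_in_graph_mat]
      omega_qp_vec Y_def
    using symmetric_mat_inner[OF Ds, of u "p - u"]
    by (simp add: matrix_vector_mult_diff_rdistrib inner_diff_right inner_commute)
  also have "\<dots> = (X *v p) \<bullet> p - u \<bullet> (X *v p)"
    using symmetric_mat_inner[OF Ys, of u p] Yu
    by (simp add: matrix_vector_mult_diff_distrib inner_diff_right)
  also have "u \<bullet> (X *v p) = p \<bullet> ((X ** matrix_inv Y ** X) *v p)"
    using symmetric_mat_inner[OF Xs[folded X_def], of u p]
    by (simp add: u_def matrix_vector_mul_assoc matrix_mul_assoc inner_commute)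
  also have "(X *v p) \<bullet> p - p \<bullet> ((X ** matrix_inv Y ** X) *v p)
    = quad_form (X - X ** matrix_inv Y ** X) p"
    by (simp add: matrix_vector_mult_diff_rdistrib inner_diff_right inner_commute)
  finally show ?thesis unfolding X_def Y_def .
qed

lemma neg_index_graph_mat_graph_mat:
  assumes "symmetric_mat B" "symmetric_mat D" "symmetric_mat (A - B)" "invertible (D - B)"
  shows "neg_index (graph_mat A) (graph_mat D) (graph_mat B)
    = neg_inertia (quad_form ((A - B) - (A - B) ** matrix_inv (D - B) ** (A - B))) UNIV"
proof (rule neg_index_graph_mat)
  show "graph_mat A \<subseteq> graph_mat D + graph_mat B"
    unfolding graph_mat_def[of A] using qp_vec_graph_mat_split[OF assms(4), of A]
    by (auto intro!: set_plus_intro qp_vec_in_graph_mat)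
qed (rule Qform_graph_mat_graph_mat[OF assms])

text \<open>The triple index is defined through an unspecified common transversal \<open>\<delta>\<close>; any such
  \<open>\<delta>\<close> is the graph of some \<open>D\<close>, and the three indices are then those of \<open>Z\<close>, \<open>D - B\<close> and
  \<open>D - A\<close>, which cancel by the Schur complement identity.\<close>

lemma triple_index_graph_mat_LD:
  assumes As: "symmetric_mat A" and Bs: "symmetric_mat B" and X: "pos_def (A - B)"
  shows "triple_index (graph_mat A) (graph_mat B) LD = 0"
proof -
  let ?P = "\<lambda>d. lagrangian d \<and> transversal d (graph_mat A) \<and> transversal d (graph_mat B)
    \<and> transversal d LD"
  define \<delta> where "\<delta> = (SOME d. ?P d)"
  have D0s: "symmetric_mat (B - mat 1)"
    using Bs unfolding symmetric_mat_def by (simp add: transpose_diff)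
  have "?P (graph_mat (B - mat 1))"
    unfolding transversal_def graph_mat_Int_graph_mat
  proof (intro conjI allI impI lagrangian_graph_mat[OF D0s] graph_mat_Int_LD)
    fix p assume "(B - mat 1) *v p = A *v p"
    then have "p \<bullet> ((A - B) *v p) = - (p \<bullet> p)"
      by (simp add: matrix_vector_mult_diff_rdistrib algebra_simps)
    then have "\<not> 0 < p \<bullet> ((A - B) *v p)" by (simp add: not_less)
    then show "p = 0" using X unfolding pos_def_def by blast
  qed (simp_all add: matrix_vector_mult_diff_rdistrib)
  then have P\<delta>: "?P \<delta>" unfolding \<delta>_def by (rule someI)
  then obtain D where Ds: "symmetric_mat D" and \<delta>D: "\<delta> = graph_mat D"
    using lagrangian_obtain_graph_mat[of \<delta>] unfolding transversal_def by blast
  have "inj ((*v) (D - B))"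
    using P\<delta> unfolding \<delta>D transversal_def graph_mat_Int_graph_mat vec.inj_iff_eq_0
    by (simp add: matrix_vector_mult_diff_rdistrib)
  then have Yi: "invertible (D - B)"
    using matrix_left_invertible_injective invertible_left_inverse by blast
  have Xs: "symmetric_mat (A - B)" using X unfolding pos_def_def by simp
  have "D - B - (A - B) = D - A" by simp
  then show ?thesis
    unfolding triple_index_def Let_def \<delta>_def[symmetric] \<delta>D
      neg_index_graph_mat_graph_mat[OF Bs Ds Xs Yi] neg_index_graph_mat_LD
    using neg_inertia_schur_complement[OF X symmetric_mat_diff[OF Ds Bs] Yi] by simp
qed

lemma triple_index_LD_eq_0:
  assumes La: "lagrangian \<alpha>" and Lb: "lagrangian \<beta>"
    and Fa: "\<And>x. x \<in> \<alpha> \<Longrightarrow> x \<noteq> 0 \<Longrightarrow> 0 < qv x \<bullet> pv x"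
    and Fb: "\<And>x. x \<in> \<beta> \<Longrightarrow> x \<noteq> 0 \<Longrightarrow> qv x \<bullet> pv x < 0"
  shows "triple_index \<alpha> \<beta> LD = 0"
proof -
  have "\<alpha> \<inter> LD = {0}" "\<beta> \<inter> LD = {0}"
    using Fa Fb La Lb subspace_0 subspace_LD unfolding lagrangian_def
    by (fastforce simp: mem_LD_iff)+
  then obtain A B where As: "symmetric_mat A" "\<alpha> = graph_mat A"
    and Bs: "symmetric_mat B" "\<beta> = graph_mat B"
    using lagrangian_obtain_graph_mat La Lb by metis
  have "0 < p \<bullet> ((A - B) *v p)" if "p \<noteq> 0" for p
    using Fa[of "qp_vec (A *v p) p"] Fb[of "qp_vec (B *v p) p"] that
    by (simp add: As Bs qp_vec_in_graph_mat qp_vec_eq_0_iff matrix_vector_mult_diff_rdistrib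
        inner_diff_right inner_commute)
  then have "pos_def (A - B)"
    unfolding pos_def_def using symmetric_mat_diff[OF As(1) Bs(1)] by blast
  then show ?thesis unfolding As Bs by (rule triple_index_graph_mat_LD[OF As(1) Bs(1)])
qed

section \<open>Polynomials of a complex matrix\<close>

definition poly_mat_vec :: "complex^'m^'m \<Rightarrow> complex poly \<Rightarrow> complex^'m \<Rightarrow> complex^'m" where
  "poly_mat_vec N p v = foldr (\<lambda>a w. a *s v + N *v w) (coeffs p) 0"

lemma poly_mat_vec_0 [simp]: "poly_mat_vec N 0 v = 0"
  by (simp add: poly_mat_vec_def)

lemma poly_mat_vec_pCons: "poly_mat_vec N (pCons a p) v = a *s v + N *v poly_mat_vec N p v"
  by (cases "p = 0 \<and> a = 0") (auto simp: poly_mat_vec_def cCons_def)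

lemma poly_mat_vec_add: "poly_mat_vec N (p + q) v = poly_mat_vec N p v + poly_mat_vec N q v"
  by (induction p q rule: poly_induct2)
    (simp_all add: poly_mat_vec_pCons matrix_vector_right_distrib vector_sadd_rdistrib algebra_simps)

lemma poly_mat_vec_smult: "poly_mat_vec N (smult c p) v = c *s poly_mat_vec N p v"
  by (induction p rule: pCons_induct)
    (simp_all add: poly_mat_vec_pCons vector_scalar_commute vector_add_ldistrib vector_smult_assoc)

lemma poly_mat_vec_vec_0 [simp]: "poly_mat_vec N p 0 = 0"
  by (induction p rule: pCons_induct) (simp_all add: poly_mat_vec_pCons)

lemma poly_mat_vec_vec_add: "poly_mat_vec N p (v + w) = poly_mat_vec N p v + poly_mat_vec N p w"
  by (induction p rule: pCons_induct)
    (simp_all add: poly_mat_vec_pCons vector_add_ldistrib matrix_vector_right_distrib algebra_simps)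

lemma poly_mat_vec_vec_scale: "poly_mat_vec N p (c *s v) = c *s poly_mat_vec N p v"
  by (induction p rule: pCons_induct)
    (simp_all add: poly_mat_vec_pCons vector_add_ldistrib vector_scalar_commute vector_smult_assoc
      mult.commute)

lemma poly_mat_vec_mult: "poly_mat_vec N (p * q) v = poly_mat_vec N p (poly_mat_vec N q v)"
  by (induction p rule: pCons_induct)
    (simp_all add: poly_mat_vec_pCons mult_pCons_left poly_mat_vec_add poly_mat_vec_smult)

lemma poly_mat_vec_sum: "poly_mat_vec N (sum f S) v = (\<Sum>i\<in>S. poly_mat_vec N (f i) v)"
  by (induction S rule: infinite_finite_induct) (simp_all add: poly_mat_vec_add)

lemma poly_mat_vec_monom: "poly_mat_vec N (monom a k) v = a *s (((*v) N) ^^ k) v"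
  by (induction k arbitrary: v)
    (simp_all add: monom_0 monom_Suc poly_mat_vec_pCons vector_scalar_commute funpow_swap1)

lemma mat_mult_vec: "mat z *v v = z *s (v::'a::comm_ring_1^'m)"
  by (simp add: matrix_vector_mult_def mat_def vec_eq_iff if_distrib if_distribR sum.delta
      cong: if_cong)

lemma poly_mat_vec_1 [simp]: "poly_mat_vec N 1 v = v"
  by (simp add: one_pCons poly_mat_vec_pCons)

lemma poly_mat_vec_linear_power:
  "poly_mat_vec N ([:-z, 1:] ^ k) v = (((*v) (N - mat z)) ^^ k) v"
proof (induction k arbitrary: v)
  case (Suc k)
  have "poly_mat_vec N [:-z, 1:] v = (N - mat z) *v v"
    by (simp add: poly_mat_vec_pCons matrix_vector_mult_diff_rdistrib mat_mult_vec)
  then show ?case by (simp only: power_Suc2 poly_mat_vec_mult Suc.IH funpow_Suc_right o_def)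
qed simp

lemma coprime_linear_poly:
  assumes "a \<noteq> b"
  shows "coprime [:-a, 1:] ([:-b, 1:] :: complex poly)"
proof (rule coprimeI)
  fix c assume "c dvd [:-a, 1:]" "c dvd [:-b, 1:]"
  then have "c dvd [:b - a:]"
    using dvd_diff[of c "[:-a, 1:]" "[:-b, 1:]"] by simp
  moreover have "is_unit [:b - a:]" using assms by (intro is_unit_triv) simp
  ultimately show "is_unit c" by (rule dvd_unit_imp_unit)
qed

text \<open>By induction on \<open>Z\<close>, splitting off one factor at a time with a Bezout identity.\<close>

lemma poly_mat_vec_kernel_decomp:
  fixes N :: "complex^'m^'m"
  assumes "finite Z" "poly_mat_vec N (\<Prod>z\<in>Z. [:-z, 1:] ^ k z) v = 0"
  shows "\<exists>w. v = (\<Sum>z\<in>Z. w z) \<and> (\<forall>z\<in>Z. poly_mat_vec N ([:-z, 1:] ^ k z) (w z) = 0)"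
  using assms
proof (induction Z arbitrary: v rule: finite_induct)
  case (insert z0 Z)
  let ?P = "[:-z0, 1:] ^ k z0" and ?Q = "\<Prod>z\<in>Z. [:-z, 1:] ^ k z"
  have PQ: "poly_mat_vec N (?P * ?Q) v = 0" using insert by simp
  have "coprime [:-z0, 1:] ?Q"
    using insert.hyps
    by (intro prod_coprime_right) (auto simp: coprime_power_right_iff intro!: coprime_linear_poly)
  then have "gcd ?P ?Q = 1" by (simp add: coprime_power_left_iff)
  then obtain a b where ab: "a * ?P + b * ?Q = 1"
    by (metis bezout_coefficients_fst_snd)
  define v1 where "v1 = poly_mat_vec N (b * ?Q) v"
  define v2 where "v2 = poly_mat_vec N (a * ?P) v"
  have "v = poly_mat_vec N (a * ?P + b * ?Q) v" using ab by simp
  then have "v = v1 + v2"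
    unfolding v1_def v2_def poly_mat_vec_add by (simp only: add.commute)
  moreover have "poly_mat_vec N ?P v1 = 0"
    unfolding v1_def poly_mat_vec_mult[symmetric] mult.left_commute[of ?P]
    by (simp only: poly_mat_vec_mult[of N b] PQ poly_mat_vec_vec_0)
  moreover have v2: "poly_mat_vec N ?Q v2 = 0"
    unfolding v2_def poly_mat_vec_mult[symmetric] mult.left_commute[of ?Q] mult.commute[of ?Q ?P]
    by (simp only: poly_mat_vec_mult[of N a] PQ poly_mat_vec_vec_0)
  moreover obtain w where "v2 = (\<Sum>z\<in>Z. w z)" "\<forall>z\<in>Z. poly_mat_vec N ([:-z, 1:] ^ k z) (w z) = 0"
    using insert.IH[OF v2] by blast
  moreover have "(\<Sum>z\<in>Z. (w(z0 := v1)) z) = (\<Sum>z\<in>Z. w z)"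
    using insert.hyps by (intro sum.cong) auto
  ultimately show ?case
    using insert.hyps by (intro exI[of _ "w(z0 := v1)"]) auto
qed simp

section \<open>Complexification and spectral subspaces\<close>

lemma cvec_nth [simp]: "cvec x $ i = complex_of_real (x $ i)"
  by (simp add: cvec_def)

lemma cmat_nth [simp]: "cmat A $ i $ j = complex_of_real (A $ i $ j)"
  by (simp add: cmat_def)

lemma cvec_add: "cvec (x + y) = cvec x + cvec y"
  and cvec_scaleR: "cvec (c *\<^sub>R x) = complex_of_real c *s cvec x"
  and cvec_0 [simp]: "cvec 0 = 0"
  by (simp_all add: vec_eq_iff)

lemma cvec_sum: "cvec (sum f S) = (\<Sum>i\<in>S. cvec (f i))"
  by (induction S rule: infinite_finite_induct) (simp_all add: cvec_add)

lemma cmat_mult_cvec: "cmat M *v cvec x = cvec (M *v x)"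
  by (simp add: vec_eq_iff matrix_vector_mult_def)

lemma cmat_funpow_cvec: "(((*v) (cmat M)) ^^ k) (cvec x) = cvec ((((*v) M) ^^ k) x)"
  by (induction k) (simp_all add: cmat_mult_cvec)

lemma norm_cvec: "norm (cvec x) = norm x"
  by (simp add: norm_vec_def)

definition vcnj :: "complex^'m \<Rightarrow> complex^'m" where
  "vcnj v = (\<chi> i. cnj (v $ i))"

definition vRe :: "complex^'m \<Rightarrow> real^'m" where
  "vRe v = (\<chi> i. Re (v $ i))"

definition vIm :: "complex^'m \<Rightarrow> real^'m" where
  "vIm v = (\<chi> i. Im (v $ i))"

lemma vcnj_add: "vcnj (v + w) = vcnj v + vcnj w"
  and vcnj_diff: "vcnj (v - w) = vcnj v - vcnj w"
  and vcnj_smult: "vcnj (c *s v) = cnj c *s vcnj v"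
  and vcnj_0 [simp]: "vcnj 0 = 0"
  and vcnj_cmat_mult: "vcnj (cmat M *v v) = cmat M *v vcnj v"
  by (simp_all add: vcnj_def vec_eq_iff matrix_vector_mult_def)

lemma vcnj_sum: "vcnj (sum f S) = (\<Sum>i\<in>S. vcnj (f i))"
  by (induction S rule: infinite_finite_induct) (simp_all add: vcnj_add)

lemma cvec_vRe: "cvec (vRe v) = (1/2) *s (v + vcnj v)"
  by (simp add: vec_eq_iff vRe_def vcnj_def complex_eq_iff)

lemma vRe_add: "vRe (v + w) = vRe v + vRe w"
  and vRe_cvec: "vRe (cvec x) = x"
  and vRe_cvec_ii: "vRe (cvec p + \<i> *s cvec q) = p"
  and vIm_cvec_ii: "vIm (cvec p + \<i> *s cvec q) = q"
  by (simp_all add: vRe_def vIm_def vec_eq_iff)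

lemma cvec_vRe_vIm: "v = cvec (vRe v) + \<i> *s cvec (vIm v)"
  by (simp add: vec_eq_iff vRe_def vIm_def complex_eq_iff)

lemma krylov_relation:
  fixes M :: "real^'m^'m"
  obtains c :: "nat \<Rightarrow> real"
  where "\<exists>k\<le>CARD('m). c k \<noteq> 0" "(\<Sum>k\<le>CARD('m). c k *\<^sub>R (((*v) M) ^^ k) x) = 0"
proof -
  let ?m = "CARD('m)"
  define Kr where "Kr k = (((*v) M) ^^ k) x" for k
  show ?thesis
  proof (cases "inj_on Kr {..?m}")
    case False
    then obtain i j where ij: "i \<le> ?m" "j \<le> ?m" "i \<noteq> j" "Kr i = Kr j"
      unfolding inj_on_def by auto
    define c where "c k = (if k = i then 1 else if k = j then -1 else 0 :: real)" for k
    have "(\<Sum>k\<le>?m. c k *\<^sub>R Kr k)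
      = (\<Sum>k\<le>?m. if k = i then Kr k else 0) - (\<Sum>k\<le>?m. if k = j then Kr k else 0)"
      unfolding sum_subtractf[symmetric] using ij(3) by (intro sum.cong) (auto simp: c_def)
    also have "\<dots> = 0" using ij by (simp add: sum.delta)
    finally have "(\<Sum>k\<le>?m. c k *\<^sub>R Kr k) = 0" .
    moreover have "\<exists>k\<le>?m. c k \<noteq> 0" using ij(1) by (intro exI[of _ i]) (simp add: c_def)
    ultimately show ?thesis using that[of c] unfolding Kr_def by blast
  next
    case True
    then have "card (Kr ` {..?m}) = ?m + 1" by (simp add: card_image)
    then have "dependent (Kr ` {..?m})" using independent_bound[of "Kr ` {..?m}"] by auto
    then obtain u where u: "\<exists>v\<in>Kr ` {..?m}. u v \<noteq> 0" "(\<Sum>v\<in>Kr ` {..?m}. u v *\<^sub>R v) = 0"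
      using dependent_finite[of "Kr ` {..?m}"] by auto
    then show ?thesis
      using that[of "u \<circ> Kr"] sum.reindex[OF True, of "\<lambda>v. u v *\<^sub>R v"] by (auto simp: Kr_def)
  qed
qed

lemma ex_annihilating_poly:
  fixes M :: "real^'m^'m" and x :: "real^'m"
  obtains p :: "complex poly"
  where "p \<noteq> 0" "degree p \<le> CARD('m)" "poly_mat_vec (cmat M) p (cvec x) = 0"
proof -
  obtain c where c: "\<exists>k\<le>CARD('m). c k \<noteq> 0" "(\<Sum>k\<le>CARD('m). c k *\<^sub>R (((*v) M) ^^ k) x) = 0"
    by (rule krylov_relation)
  define p where "p = (\<Sum>k\<le>CARD('m). monom (complex_of_real (c k)) k)"
  have coeff_p: "coeff p k = (if k \<le> CARD('m) then complex_of_real (c k) else 0)" for k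
    unfolding p_def by (simp add: coeff_sum coeff_monom)
  have "p \<noteq> 0" using c(1) by (metis coeff_p coeff_0 of_real_eq_0_iff)
  moreover have "degree p \<le> CARD('m)" by (rule degree_le) (simp add: coeff_p)
  moreover have "poly_mat_vec (cmat M) p (cvec x) = 0"
    using arg_cong[OF c(2), of cvec]
    by (simp add: p_def poly_mat_vec_sum poly_mat_vec_monom cmat_funpow_cvec cvec_sum cvec_scaleR)
  ultimately show ?thesis using that by blast
qed

definition gen_eigensum :: "complex^'m^'m \<Rightarrow> complex set \<Rightarrow> (complex^'m) set" where
  "gen_eigensum N S = {v. \<exists>F w. finite F \<and> F \<subseteq> S \<and> (\<forall>l\<in>F. w l \<in> gen_eigenspace N l) \<and> v = sum w F}"

lemma mem_spectral_subspace_iff: "x \<in> spectral_subspace A S \<longleftrightarrow> cvec x \<in> gen_eigensum (cmat A) S"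
  by (simp add: spectral_subspace_def gen_eigensum_def)

lemma gen_eigenspace_iff_poly:
  "v \<in> gen_eigenspace N z \<longleftrightarrow> poly_mat_vec N ([:-z, 1:] ^ CARD('m)) v = 0"
  for N :: "complex^'m^'m"
  by (simp add: gen_eigenspace_def poly_mat_vec_linear_power)

lemma gen_eigenspace_0: "0 \<in> gen_eigenspace N z"
  by (simp add: gen_eigenspace_iff_poly)

lemma gen_eigenspace_add:
  "v \<in> gen_eigenspace N z \<Longrightarrow> w \<in> gen_eigenspace N z \<Longrightarrow> v + w \<in> gen_eigenspace N z"
  by (simp add: gen_eigenspace_iff_poly poly_mat_vec_vec_add)

lemma gen_eigenspace_smult: "v \<in> gen_eigenspace N z \<Longrightarrow> c *s v \<in> gen_eigenspace N z"
  by (simp add: gen_eigenspace_iff_poly poly_mat_vec_vec_scale)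

lemma gen_eigenspace_vcnj:
  assumes "v \<in> gen_eigenspace (cmat M) z"
  shows "vcnj v \<in> gen_eigenspace (cmat M) (cnj z)"
proof -
  have "vcnj ((cmat M - mat z) *v w) = (cmat M - mat (cnj z)) *v vcnj w" for w
    by (simp add: matrix_vector_mult_diff_rdistrib mat_mult_vec vcnj_diff vcnj_cmat_mult vcnj_smult)
  then have funpow_vcnj:
    "vcnj ((((*v) (cmat M - mat z)) ^^ k) w) = (((*v) (cmat M - mat (cnj z))) ^^ k) (vcnj w)"
    for k w by (induction k) simp_all
  show ?thesis using assms unfolding gen_eigenspace_def by (simp flip: funpow_vcnj)
qed

lemma gen_eigensum_intro:
  "finite F \<Longrightarrow> F \<subseteq> S \<Longrightarrow> (\<And>l. l \<in> F \<Longrightarrow> w l \<in> gen_eigenspace N l) \<Longrightarrow> sum w F \<in> gen_eigensum N S"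
  unfolding gen_eigensum_def by blast

lemma gen_eigensum_0: "0 \<in> gen_eigensum N S"
  using gen_eigensum_intro[of "{}"] by simp

lemma gen_eigensum_add:
  assumes "a \<in> gen_eigensum N S" "b \<in> gen_eigensum N S"
  shows "a + b \<in> gen_eigensum N S"
proof -
  obtain F1 w1 where 1: "finite F1" "F1 \<subseteq> S" "\<forall>l\<in>F1. w1 l \<in> gen_eigenspace N l" "a = sum w1 F1"
    using assms(1) unfolding gen_eigensum_def by blast
  obtain F2 w2 where 2: "finite F2" "F2 \<subseteq> S" "\<forall>l\<in>F2. w2 l \<in> gen_eigenspace N l" "b = sum w2 F2"
    using assms(2) unfolding gen_eigensum_def by blast
  define w where "w l = (if l \<in> F1 then w1 l else 0) + (if l \<in> F2 then w2 l else 0)" for l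
  have "sum w (F1 \<union> F2) = sum w1 F1 + sum w2 F2"
    using 1(1) 2(1) by (simp add: w_def sum.distrib sum.If_cases Int_absorb1)
  moreover have "sum w (F1 \<union> F2) \<in> gen_eigensum N S"
    by (rule gen_eigensum_intro)
      (use 1 2 in \<open>auto simp: w_def intro!: gen_eigenspace_add gen_eigenspace_0\<close>)
  ultimately show ?thesis using 1(4) 2(4) by simp
qed

lemma gen_eigensum_smult:
  assumes "a \<in> gen_eigensum N S"
  shows "c *s a \<in> gen_eigensum N S"
proof -
  obtain F w where 1: "finite F" "F \<subseteq> S" "\<forall>l\<in>F. w l \<in> gen_eigenspace N l" "a = sum w F"
    using assms unfolding gen_eigensum_def by blast
  have "c *s a = (\<Sum>l\<in>F. c *s w l)"
    unfolding 1(4) by (induction F rule: infinite_finite_induct) (simp_all add: vector_add_ldistrib)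
  moreover have "(\<Sum>l\<in>F. c *s w l) \<in> gen_eigensum N S"
    by (rule gen_eigensum_intro) (use 1 in \<open>auto intro: gen_eigenspace_smult\<close>)
  ultimately show ?thesis by simp
qed

lemma gen_eigensum_vcnj:
  assumes "a \<in> gen_eigensum (cmat M) S" "\<And>z. z \<in> S \<Longrightarrow> cnj z \<in> S"
  shows "vcnj a \<in> gen_eigensum (cmat M) S"
proof -
  obtain F w where 1: "finite F" "F \<subseteq> S" "\<forall>l\<in>F. w l \<in> gen_eigenspace (cmat M) l" "a = sum w F"
    using assms unfolding gen_eigensum_def by blast
  have "vcnj a = (\<Sum>l\<in>cnj ` F. vcnj (w (cnj l)))"
    unfolding 1(4) vcnj_sum by (subst sum.reindex) (auto simp: inj_on_def)
  moreover have "(\<Sum>l\<in>cnj ` F. vcnj (w (cnj l))) \<in> gen_eigensum (cmat M) S"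
    by (rule gen_eigensum_intro)
      (use 1 assms(2) gen_eigenspace_vcnj in \<open>force+\<close>)
  ultimately show ?thesis by simp
qed

lemma subspace_spectral_subspace: "subspace (spectral_subspace A S)"
  unfolding subspace_def
  by (simp add: mem_spectral_subspace_iff gen_eigensum_0 gen_eigensum_add gen_eigensum_smult
      cvec_add cvec_scaleR)

text \<open>If all eigenvalues in \<open>S\<close> come with their conjugates, the real part of a sum of
  generalised eigenvectors is again one: it is half the sum with its conjugate.\<close>

lemma vRe_mem_spectral_subspace:
  assumes "v \<in> gen_eigensum (cmat M) S" "\<And>z. z \<in> S \<Longrightarrow> cnj z \<in> S"
  shows "vRe v \<in> spectral_subspace M S"
  unfolding mem_spectral_subspace_iff cvec_vRe
  by (intro gen_eigensum_smult gen_eigensum_add assms gen_eigensum_vcnj)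

lemma funpow_eq_0_imp_eq_0:
  fixes g :: "'a::zero \<Rightarrow> 'a"
  assumes "\<And>w. g w = 0 \<Longrightarrow> w = 0" "(g ^^ k) w = 0"
  shows "w = 0"
  using assms(2)
proof (induction k arbitrary: w)
  case (Suc k)
  then have "g w = 0" by (simp only: funpow_Suc_right o_def)
  then show ?case by (rule assms(1))
qed simp

text \<open>Every vector is a sum of generalised eigenvectors: factor an annihilating polynomial
  into linear factors and decompose along them.\<close>

lemma cvec_mem_gen_eigensum:
  fixes M :: "real^'m^'m"
  shows "cvec x \<in> gen_eigensum (cmat M) {z. \<exists>w. w \<noteq> 0 \<and> cmat M *v w = z *s w}"
proof -
  let ?N = "cmat M" and ?m = "CARD('m)"
  obtain p :: "complex poly" where p: "p \<noteq> 0" "degree p \<le> ?m" "poly_mat_vec ?N p (cvec x) = 0"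
    by (rule ex_annihilating_poly)
  define Z where "Z = {z. poly p z = 0}"
  have fZ: "finite Z" unfolding Z_def using p(1) by (rule poly_roots_finite)
  define k where "k z = order z p" for z
  have "poly_mat_vec ?N (smult (lead_coeff p) (\<Prod>z\<in>Z. [:-z, 1:] ^ k z)) (cvec x) = 0"
    unfolding Z_def k_def complex_poly_decompose using p(3) .
  then have "poly_mat_vec ?N (\<Prod>z\<in>Z. [:-z, 1:] ^ k z) (cvec x) = 0"
    using p(1) by (simp add: poly_mat_vec_smult vec_eq_iff)
  from poly_mat_vec_kernel_decomp[OF fZ this]
  obtain w where w: "cvec x = (\<Sum>z\<in>Z. w z)"
    "\<And>z. z \<in> Z \<Longrightarrow> poly_mat_vec ?N ([:-z, 1:] ^ k z) (w z) = 0"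
    by blast
  have w_gen: "w z \<in> gen_eigenspace ?N z" if "z \<in> Z" for z
  proof -
    have "k z \<le> ?m" unfolding k_def using order_degree[OF p(1)] p(2) by (rule le_trans)
    then have "[:-z, 1:] ^ ?m = [:-z, 1:] ^ (?m - k z) * [:-z, 1:] ^ k z"
      by (simp add: power_add[symmetric])
    then show ?thesis
      using w(2)[OF that] by (simp add: gen_eigenspace_iff_poly poly_mat_vec_mult)
  qed
  let ?E = "{z. \<exists>w. w \<noteq> 0 \<and> ?N *v w = z *s w}"
  have "w z = 0" if "z \<in> Z - ?E" for z
    by (rule funpow_eq_0_imp_eq_0[OF _ w(2)[OF DiffD1[OF that], unfolded poly_mat_vec_linear_power]])
      (use that in \<open>auto simp: matrix_vector_mult_diff_rdistrib mat_mult_vec\<close>)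
  then have "cvec x = (\<Sum>z\<in>Z \<inter> ?E. w z)"
    unfolding w(1) using fZ by (intro sum.mono_neutral_right) auto
  then show ?thesis
    using fZ w_gen by (auto intro!: gen_eigensum_intro)
qed

section \<open>Stable and unstable subspaces via a Lyapunov function\<close>

lemma norm_smult_vec: "norm (c *s (v::complex^'m)) = cmod c * norm v"
  unfolding norm_vec_def by (simp add: L2_set_right_distrib norm_mult)

lemma contraction_tendsto_zero:
  fixes r e :: "nat \<Rightarrow> real"
  assumes q: "0 \<le> q" "q < 1" and rec: "\<And>k. r (Suc k) \<le> q * r k + e k"
    and r0: "\<And>k. 0 \<le> r k" and e: "e \<longlonglongrightarrow> 0"
  shows "r \<longlonglongrightarrow> 0"
proof (rule LIMSEQ_I)
  fix \<epsilon> :: real assume \<epsilon>: "0 < \<epsilon>"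
  have "0 < \<epsilon> * (1 - q) / 2" using \<epsilon> q by simp
  from LIMSEQ_D[OF e this] obtain N where N0: "\<forall>k\<ge>N. norm (e k - 0) < \<epsilon> * (1 - q) / 2"
    by blast
  have N: "norm (e k) < \<epsilon> * (1 - q) / 2" if "k \<ge> N" for k using N0 that by simp
  have bound: "r (N + j) \<le> q ^ j * r N + \<epsilon> / 2" for j
  proof (induction j)
    case (Suc j)
    have "r (N + Suc j) \<le> q * r (N + j) + e (N + j)" using rec[of "N + j"] by simp
    also have "\<dots> \<le> q * (q ^ j * r N + \<epsilon> / 2) + \<epsilon> * (1 - q) / 2"
      using Suc.IH N[of "N + j"] q by (intro add_mono mult_left_mono) auto
    also have "\<dots> = q ^ Suc j * r N + \<epsilon> / 2" by (simp add: algebra_simps)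
    finally show ?case .
  qed (use \<epsilon> in simp)
  have "(\<lambda>j. q ^ j * r N) \<longlonglongrightarrow> 0 * r N"
    by (intro tendsto_mult tendsto_const LIMSEQ_realpow_zero q)
  from LIMSEQ_D[OF this, of "\<epsilon> / 2"] \<epsilon>
  obtain N2 where N20: "\<forall>j\<ge>N2. norm (q ^ j * r N - 0 * r N) < \<epsilon> / 2" by auto
  show "\<exists>no. \<forall>n\<ge>no. norm (r n - 0) < \<epsilon>"
  proof (intro exI allI impI)
    fix n assume n: "n \<ge> N + N2"
    have "r n \<le> q ^ (n - N) * r N + \<epsilon> / 2" using bound[of "n - N"] n by simp
    also have "\<dots> < \<epsilon>"
      using N20[rule_format, of "n - N"] n by (simp add: le_diff_conv2 abs_less_iff)
    finally show "norm (r n - 0) < \<epsilon>" using r0[of n] by simp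
  qed
qed

lemma affine_recurrence_tendsto_zero:
  fixes a b :: "nat \<Rightarrow> complex^'m"
  assumes "cmod \<nu> < 1" and "\<And>k. a (Suc k) = \<nu> *s a k + b k" and "b \<longlonglongrightarrow> 0"
  shows "a \<longlonglongrightarrow> 0"
proof -
  have "(\<lambda>k. norm (a k)) \<longlonglongrightarrow> 0"
  proof (rule contraction_tendsto_zero[of "cmod \<nu>" _ "\<lambda>k. norm (b k)"])
    show "norm (a (Suc k)) \<le> cmod \<nu> * norm (a k) + norm (b k)" for k
      unfolding assms(2) using norm_triangle_ineq[of "\<nu> *s a k" "b k"] by (simp add: norm_smult_vec)
  qed (use assms in \<open>auto simp: tendsto_norm_zero\<close>)
  then show ?thesis by (simp add: tendsto_norm_zero_iff)
qed

definition euler_step :: "complex^'m^'m \<Rightarrow> real \<Rightarrow> complex^'m \<Rightarrow> complex^'m" where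
  "euler_step N s v = v + complex_of_real s *s (N *v v)"

lemma euler_step_add: "euler_step N s (v + w) = euler_step N s v + euler_step N s w"
  and euler_step_smult: "euler_step N s (c *s v) = c *s euler_step N s v"
  by (simp_all add: euler_step_def matrix_vector_right_distrib vector_add_ldistrib algebra_simps
      vector_scalar_commute vector_smult_assoc)

lemma euler_steps_add: "(euler_step N s ^^ k) (v + w) = (euler_step N s ^^ k) v + (euler_step N s ^^ k) w"
  by (induction k) (simp_all add: euler_step_add)

lemma euler_steps_smult: "(euler_step N s ^^ k) (c *s v) = c *s (euler_step N s ^^ k) v"
  by (induction k) (simp_all add: euler_step_smult)

lemma euler_steps_0: "(euler_step N s ^^ k) 0 = 0"
  using euler_steps_smult[where c = 0 and v = 0] by simp

lemma euler_steps_sum: "(euler_step N s ^^ k) (sum f S) = (\<Sum>i\<in>S. (euler_step N s ^^ k) (f i))"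
  by (induction S rule: infinite_finite_induct) (simp_all add: euler_steps_add euler_steps_0)

text \<open>On the generalised eigenspace of \<open>l\<close>, the Euler step acts as \<open>1 + s l\<close> plus a nilpotent
  part; induction on the nilpotency order shows the iterates decay when \<open>|1 + s l| < 1\<close>.\<close>

lemma euler_steps_gen_eigenvector_tendsto_zero:
  fixes N :: "complex^'m^'m"
  assumes \<nu>: "cmod (1 + complex_of_real s * l) < 1"
  shows "(((*v) (N - mat l)) ^^ a) u = 0 \<Longrightarrow> (\<lambda>k. (euler_step N s ^^ k) u) \<longlonglongrightarrow> 0"
proof (induction a arbitrary: u)
  case 0
  then show ?case by (simp add: euler_steps_0)
next
  case (Suc a)
  define w where "w = (N - mat l) *v u"
  have "(((*v) (N - mat l)) ^^ a) w = 0"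
    using Suc.prems unfolding w_def by (simp only: funpow_Suc_right o_def)
  then have w_lim: "(\<lambda>k. (euler_step N s ^^ k) w) \<longlonglongrightarrow> 0" by (rule Suc.IH)
  have "euler_step N s u = (1 + complex_of_real s * l) *s u + complex_of_real s *s w"
    unfolding euler_step_def w_def
    by (simp add: vec_eq_iff algebra_simps matrix_vector_mult_diff_rdistrib mat_mult_vec)
  then have step: "(euler_step N s ^^ Suc k) u
      = (1 + complex_of_real s * l) *s (euler_step N s ^^ k) u + complex_of_real s *s (euler_step N s ^^ k) w"
    for k by (simp only: funpow_Suc_right o_def euler_steps_add euler_steps_smult)
  have "(\<lambda>k. norm (complex_of_real s *s (euler_step N s ^^ k) w)) \<longlonglongrightarrow> 0"
    using tendsto_mult_right_zero[OF tendsto_norm_zero[OF w_lim], of "\<bar>s\<bar>"]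
    by (simp add: norm_smult_vec)
  then show ?case
    by (intro affine_recurrence_tendsto_zero[where a = "\<lambda>k. (euler_step N s ^^ k) u", OF \<nu> step])
      (simp add: tendsto_norm_zero_iff)
qed

lemma euler_factor_lt_1:
  assumes "Re l < 0" "0 < s" "s \<le> - Re l / (cmod l)^2"
  shows "cmod (1 + complex_of_real s * l) < 1"
proof -
  have "l \<noteq> 0" using assms(1) by auto
  then have "s * (cmod l)^2 \<le> - Re l" using assms(3) by (simp add: field_simps)
  then have "s * s * (cmod l)^2 \<le> s * (- Re l)"
    using assms(2) by (metis mult.assoc mult_le_cancel_left_pos)
  moreover have "(cmod (1 + complex_of_real s * l))^2 = 1 + 2 * s * Re l + s * s * (cmod l)^2"
    unfolding cmod_power2 by (simp add: power2_eq_square algebra_simps)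
  moreover have "s * Re l < 0" using assms(1,2) by (simp add: mult_pos_neg)
  ultimately have "(cmod (1 + complex_of_real s * l))^2 < 1" by simp
  then show ?thesis by (simp add: power_less_one_iff)
qed

lemma euler_iterates_Es_tendsto_zero:
  fixes M :: "real^'m^'m"
  assumes "x \<in> Es M"
  obtains s0 where "0 < s0"
    "\<And>s. 0 < s \<Longrightarrow> s \<le> s0 \<Longrightarrow> (\<lambda>k. ((\<lambda>y. y + s *\<^sub>R (M *v y)) ^^ k) x) \<longlonglongrightarrow> 0"
proof -
  obtain F w where F: "finite F" "F \<subseteq> {l. Re l < 0}" "\<forall>l\<in>F. w l \<in> gen_eigenspace (cmat M) l"
      "cvec x = sum w F"
    using assms unfolding Es_def mem_spectral_subspace_iff gen_eigensum_def by blast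
  define s0 where "s0 = Min (insert 1 ((\<lambda>l. - Re l / (cmod l)^2) ` F))"
  have F_pos: "0 < - Re l / (cmod l)^2" if "l \<in> F" for l
  proof -
    have "Re l < 0" using F(2) that by auto
    then show ?thesis by (intro divide_pos_pos) auto
  qed
  then have "0 < s0" unfolding s0_def using F(1) by (subst Min_gr_iff) auto
  moreover have "(\<lambda>k. ((\<lambda>y. y + s *\<^sub>R (M *v y)) ^^ k) x) \<longlonglongrightarrow> 0" if s: "0 < s" "s \<le> s0" for s
  proof -
    have \<nu>: "cmod (1 + complex_of_real s * l) < 1" if l: "l \<in> F" for l
      using F(1,2) s l unfolding s0_def
      by (intro euler_factor_lt_1) (auto intro: order.trans[OF _ Min_le])
    have "cvec (y + s *\<^sub>R (M *v y)) = euler_step (cmat M) s (cvec y)" for y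
      by (simp add: euler_step_def cvec_add cvec_scaleR cmat_mult_cvec)
    then have "cvec (((\<lambda>y. y + s *\<^sub>R (M *v y)) ^^ k) x) = (euler_step (cmat M) s ^^ k) (cvec x)"
      for k by (induction k) simp_all
    moreover have "(\<lambda>k. (euler_step (cmat M) s ^^ k) (cvec x)) \<longlonglongrightarrow> 0"
      unfolding F(4) euler_steps_sum
    proof (rule tendsto_null_sum)
      fix l assume l: "l \<in> F"
      then have "(((*v) (cmat M - mat l)) ^^ CARD('m)) (w l) = 0"
        using F(3) unfolding gen_eigenspace_def by blast
      then show "(\<lambda>k. (euler_step (cmat M) s ^^ k) (w l)) \<longlonglongrightarrow> 0"
        by (rule euler_steps_gen_eigenvector_tendsto_zero[OF \<nu>[OF l]])
    qed
    ultimately have "(\<lambda>k. norm (((\<lambda>y. y + s *\<^sub>R (M *v y)) ^^ k) x)) \<longlonglongrightarrow> 0"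
      using tendsto_norm_zero by (simp flip: norm_cvec)
    then show ?thesis by (rule tendsto_norm_zero_cancel)
  qed
  ultimately show ?thesis using that by blast
qed

lemma quadratic_form_linear_bound:
  fixes L :: "'a::euclidean_space \<Rightarrow> 'a" and T :: "'b::euclidean_space \<Rightarrow> 'a"
  assumes "linear L" "linear T"
  obtains K where "0 < K" "\<And>y. \<bar>T y \<bullet> L (T y)\<bar> \<le> K * (norm y)^2"
proof -
  obtain KL where KL: "0 < KL" "\<And>y. norm (L y) \<le> KL * norm y"
    using linear_bounded_pos[OF assms(1)] by blast
  obtain KT where KT: "0 < KT" "\<And>y. norm (T y) \<le> KT * norm y"
    using linear_bounded_pos[OF assms(2)] by blast
  have "\<bar>T y \<bullet> L (T y)\<bar> \<le> KL * KT^2 * (norm y)^2" for y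
  proof -
    have "\<bar>T y \<bullet> L (T y)\<bar> \<le> norm (T y) * (KL * norm (T y))"
      using Cauchy_Schwarz_ineq2[of "T y" "L (T y)"] KL(2)[of "T y"]
      by (meson mult_left_mono norm_ge_zero order_trans)
    also have "\<dots> = KL * (norm (T y))^2" by (simp add: power2_eq_square)
    also have "\<dots> \<le> KL * (KT * norm y)^2"
      using KT(2)[of y] KL(1) by (intro mult_left_mono power_mono) auto
    finally show ?thesis by (simp add: power_mult_distrib)
  qed
  then show ?thesis using that[of "KL * KT^2"] KL(1) KT(1) by simp
qed

lemma lyapunov_euler_step_increase:
  fixes M :: "real^'m^'m" and L :: "real^'m \<Rightarrow> real^'m"
  assumes lin: "linear L"
    and D: "\<And>y. c * (norm y)^2 \<le> y \<bullet> L (M *v y) + (M *v y) \<bullet> L y"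
    and K: "\<And>y. \<bar>(M *v y) \<bullet> L (M *v y)\<bar> \<le> K * (norm y)^2"
    and s: "0 \<le> s" "s * K \<le> c / 2"
  shows "y \<bullet> L y + s * (c / 2) * (norm y)^2 \<le> (y + s *\<^sub>R (M *v y)) \<bullet> L (y + s *\<^sub>R (M *v y))"
proof -
  have "(y + s *\<^sub>R (M *v y)) \<bullet> L (y + s *\<^sub>R (M *v y))
    = y \<bullet> L y + s * (y \<bullet> L (M *v y) + (M *v y) \<bullet> L y) + s * s * ((M *v y) \<bullet> L (M *v y))"
    by (simp add: linear_add[OF lin] linear_scale[OF lin] inner_add_left inner_add_right algebra_simps)
  moreover have "s * (c * (norm y)^2) \<le> s * (y \<bullet> L (M *v y) + (M *v y) \<bullet> L y)"
    using D[of y] s(1) by (rule mult_left_mono)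
  moreover have "s * s * (- (K * (norm y)^2)) \<le> s * s * ((M *v y) \<bullet> L (M *v y))"
    using K[of y] by (intro mult_left_mono) (auto simp: abs_le_iff)
  moreover have "s * (s * K * (norm y)^2) \<le> s * (c / 2 * (norm y)^2)"
    using s by (intro mult_left_mono mult_right_mono) simp_all
  ultimately show ?thesis by (simp add: algebra_simps)
qed

text \<open>\<open>F y = y \<bullet> L y\<close> is a strict Lyapunov function for \<open>y' = M y\<close>. Along the Euler
  iterates of a vector of the stable subspace it increases strictly and tends to \<open>F 0 = 0\<close>,
  so it is negative there.\<close>

lemma lyapunov_neg_on_Es:
  fixes M :: "real^'m^'m" and L :: "real^'m \<Rightarrow> real^'m"
  assumes lin: "linear L" and c: "0 < c"
    and D: "\<And>y. c * (norm y)^2 \<le> y \<bullet> L (M *v y) + (M *v y) \<bullet> L y"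
    and x: "x \<in> Es M" "x \<noteq> 0"
  shows "x \<bullet> L x < 0"
proof -
  define F where "F y = y \<bullet> L y" for y
  obtain K where K: "0 < K" "\<And>y. \<bar>(M *v y) \<bullet> L (M *v y)\<bar> \<le> K * (norm y)^2"
    using quadratic_form_linear_bound[OF lin matrix_vector_mul_linear] by blast
  obtain s0 where s0: "0 < s0"
    "\<And>s. 0 < s \<Longrightarrow> s \<le> s0 \<Longrightarrow> (\<lambda>k. ((\<lambda>y. y + s *\<^sub>R (M *v y)) ^^ k) x) \<longlonglongrightarrow> 0"
    using euler_iterates_Es_tendsto_zero[OF x(1)] by blast
  define s where "s = min s0 (c / (2 * K))"
  have s: "0 < s" "s \<le> s0" "s * K \<le> c / 2"
    using s0(1) c K(1) by (auto simp: s_def min_def field_simps)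
  define X where "X k = ((\<lambda>y. y + s *\<^sub>R (M *v y)) ^^ k) x" for k
  have X_Suc: "X (Suc k) = X k + s *\<^sub>R (M *v X k)" for k by (simp add: X_def)
  have incr: "F (X k) + s * (c / 2) * (norm (X k))^2 \<le> F (X (Suc k))" for k
    unfolding F_def X_Suc using s by (intro lyapunov_euler_step_increase[OF lin D K(2)]) auto
  have X0: "X \<longlonglongrightarrow> 0" unfolding X_def using s0(2)[OF s(1,2)] .
  have "(\<lambda>k. L (X k)) \<longlonglongrightarrow> L 0"
    using lin by (intro bounded_linear.tendsto[OF _ X0]) (simp add: linear_conv_bounded_linear)
  from tendsto_inner[OF X0 this] have "(\<lambda>k. F (X k)) \<longlonglongrightarrow> 0"
    unfolding F_def by simp
  moreover have "F (X 1) \<le> F (X n)" if "n \<ge> 1" for n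
    using that
  proof (induction n rule: dec_induct)
    case (step n)
    have "0 \<le> s * (c / 2) * (norm (X n))^2" using s(1) c by simp
    then show ?case using step.IH incr[of n] by linarith
  qed simp
  ultimately have "F (X 1) \<le> 0" by (intro LIMSEQ_le_const) auto
  moreover have "F x < F (X 1)"
  proof -
    have "0 < s * (c / 2) * (norm x)^2" using s(1) c x(2) by simp
    then show ?thesis using incr[of 0] by (simp add: X_def)
  qed
  ultimately show ?thesis unfolding F_def by simp
qed

lemma gen_eigenspace_uminus:
  fixes M :: "real^'n^'n"
  assumes "v \<in> gen_eigenspace (cmat M) z"
  shows "v \<in> gen_eigenspace (cmat (- M)) (- z)"
proof -
  have eq: "cmat (- M) - mat (- z) = - (cmat M - mat z)" by (simp add: vec_eq_iff mat_def)
  have neg: "(((*v) (- A)) ^^ k) u = ((-1::complex) ^ k) *s ((((*v) A) ^^ k) u)"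
    for A :: "complex^'n^'n" and u k
    by (induction k) (simp_all add: matrix_vector_mult_uminus vector_scalar_commute)
  show ?thesis using assms unfolding gen_eigenspace_def eq neg by simp
qed

lemma Eu_subset_Es_uminus: "Eu M \<subseteq> Es (- M)"
proof
  fix x assume "x \<in> Eu M"
  then obtain F w where F: "finite F" "F \<subseteq> {l. 0 < Re l}"
    "\<forall>l\<in>F. w l \<in> gen_eigenspace (cmat M) l" "cvec x = sum w F"
    unfolding Eu_def mem_spectral_subspace_iff gen_eigensum_def by blast
  have "cvec x = (\<Sum>l\<in>uminus ` F. w (- l))"
    unfolding F(4) by (subst sum.reindex) (auto simp: inj_on_def)
  moreover have "(\<Sum>l\<in>uminus ` F. w (- l)) \<in> gen_eigensum (cmat (- M)) {l. Re l < 0}"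
    by (rule gen_eigensum_intro) (use F gen_eigenspace_uminus in force)+
  ultimately show "x \<in> Es (- M)" unfolding Es_def mem_spectral_subspace_iff by simp
qed

lemma lyapunov_pos_on_Eu:
  fixes M :: "real^'m^'m" and L :: "real^'m \<Rightarrow> real^'m"
  assumes lin: "linear L" and c: "0 < c"
    and D: "\<And>y. c * (norm y)^2 \<le> y \<bullet> L (M *v y) + (M *v y) \<bullet> L y"
    and x: "x \<in> Eu M" "x \<noteq> 0"
  shows "0 < x \<bullet> L x"
proof -
  have "x \<bullet> (- L x) < 0"
  proof (rule lyapunov_neg_on_Es[OF linear_compose_neg[OF lin] c _ _ x(2)])
    show "c * (norm y)^2 \<le> y \<bullet> - L (- M *v y) + (- M *v y) \<bullet> - L y" for y
      using D[of y] by (simp add: matrix_vector_mult_uminus linear_neg[OF lin])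
    show "x \<in> Es (- M)" using Eu_subset_Es_uminus x(1) by blast
  qed
  then show ?thesis by simp
qed

text \<open>A positive Lyapunov derivative also excludes eigenvalues on the imaginary axis: for
  \<open>M (a + i b) = i t (a + i b)\<close> the derivatives at \<open>a\<close> and \<open>b\<close> cancel.\<close>

lemma no_imaginary_eigenvalue:
  fixes M :: "real^'m^'m" and L :: "real^'m \<Rightarrow> real^'m"
  assumes lin: "linear L" and D: "\<And>y. y \<noteq> 0 \<Longrightarrow> 0 < y \<bullet> L (M *v y) + (M *v y) \<bullet> L y"
    and z: "Re z = 0" and w: "cmat M *v w = z *s w"
  shows "w = 0"
proof -
  define a where "a = vRe w"
  define b where "b = vIm w"
  have wab: "w = cvec a + \<i> *s cvec b" unfolding a_def b_def by (rule cvec_vRe_vIm)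
  have "cvec (M *v a) + \<i> *s cvec (M *v b) = cvec (- Im z *\<^sub>R b) + \<i> *s cvec (Im z *\<^sub>R a)"
    using w z unfolding wab
    by (simp add: matrix_vector_right_distrib vector_scalar_commute cmat_mult_cvec vec_eq_iff
        complex_eq_iff)
  from arg_cong[OF this, of vRe] arg_cong[OF this, of vIm]
  have Ma: "M *v a = - Im z *\<^sub>R b" and Mb: "M *v b = Im z *\<^sub>R a"
    by (simp_all only: vRe_cvec_ii vIm_cvec_ii)
  let ?D = "\<lambda>y. y \<bullet> L (M *v y) + (M *v y) \<bullet> L y"
  have sum0: "?D a + ?D b = 0"
    unfolding Ma Mb
    by (simp add: linear_scale[OF lin] linear_neg[OF lin] inner_commute[of "L a" b]
        inner_commute[of "L b" a])
  have D0: "0 \<le> ?D y" for y using D[of y] by (cases "y = 0") auto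
  have "a = 0" using sum0 D[of a] D0[of b] by (cases "a = 0") auto
  moreover have "b = 0" using sum0 D[of b] D0[of a] by (cases "b = 0") auto
  ultimately show ?thesis using wab by simp
qed

lemma Es_plus_Eu:
  fixes M :: "real^'m^'m"
  assumes no_imag: "\<And>z w. Re z = 0 \<Longrightarrow> cmat M *v w = z *s w \<Longrightarrow> w = 0"
  obtains a b where "a \<in> Es M" "b \<in> Eu M" "x = a + b"
proof -
  obtain F w where F: "finite F" "F \<subseteq> {z. \<exists>w. w \<noteq> 0 \<and> cmat M *v w = z *s w}"
    "\<forall>l\<in>F. w l \<in> gen_eigenspace (cmat M) l" "cvec x = sum w F"
    using cvec_mem_gen_eigensum[of x M] unfolding gen_eigensum_def by blast
  let ?S = "F \<inter> {z. Re z < 0}" and ?U = "F \<inter> {z. 0 < Re z}"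
  have "F - {z. Re z < 0} = ?U" using F(2) no_imag by (force simp: linorder_neq_iff)
  then have "cvec x = sum w ?S + sum w ?U"
    using sum.Int_Diff[OF F(1), of w "{z. Re z < 0}"] F(4) by simp
  then have "x = vRe (sum w ?S) + vRe (sum w ?U)"
    by (metis vRe_add vRe_cvec)
  moreover have "vRe (sum w ?S) \<in> Es M" "vRe (sum w ?U) \<in> Eu M"
    unfolding Es_def Eu_def using F(1,3)
    by (auto intro!: vRe_mem_spectral_subspace gen_eigensum_intro)
  ultimately show ?thesis using that by blast
qed

section \<open>Symplectic orthogonality of generalised eigenspaces\<close>

definition cbil :: "complex^'m \<Rightarrow> complex^'m \<Rightarrow> complex" where
  "cbil u v = (\<Sum>i\<in>UNIV. u $ i * v $ i)"

lemma cbil_add_right: "cbil u (v + w) = cbil u v + cbil u w"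
  and cbil_diff_left: "cbil (u - w) v = cbil u v - cbil w v"
  and cbil_diff_right: "cbil u (v - w) = cbil u v - cbil u w"
  and cbil_smult_left: "cbil (c *s u) v = c * cbil u v"
  and cbil_smult_right: "cbil u (c *s v) = c * cbil u v"
  and cbil_0_left [simp]: "cbil 0 v = 0"
  and cbil_0_right [simp]: "cbil u 0 = 0"
  by (simp_all add: cbil_def algebra_simps sum.distrib sum_subtractf sum_distrib_left)

lemma cbil_sum_left: "cbil (sum f S) v = (\<Sum>i\<in>S. cbil (f i) v)"
  by (induction S rule: infinite_finite_induct) (simp_all add: cbil_def algebra_simps sum.distrib)

lemma cbil_sum_right: "cbil u (sum f S) = (\<Sum>i\<in>S. cbil u (f i))"
  by (induction S rule: infinite_finite_induct) (simp_all add: cbil_add_right)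

lemma cbil_transpose: "cbil (A *v u) v = cbil u (transpose A *v v)"
proof -
  have "cbil (A *v u) v = (\<Sum>i\<in>UNIV. \<Sum>j\<in>UNIV. A $ i $ j * u $ j * v $ i)"
    by (simp add: cbil_def matrix_vector_mult_def sum_distrib_right)
  also have "\<dots> = (\<Sum>j\<in>UNIV. \<Sum>i\<in>UNIV. A $ i $ j * u $ j * v $ i)" by (rule sum.swap)
  also have "\<dots> = cbil u (transpose A *v v)"
    by (simp add: cbil_def matrix_vector_mult_def transpose_def sum_distrib_left mult_ac)
  finally show ?thesis .
qed

lemma cmat_mult: "cmat (A ** B) = cmat A ** cmat B"
  and cmat_transpose: "cmat (transpose A) = transpose (cmat A)"
  and cmat_add: "cmat (A + B) = cmat A + cmat B"
  and cmat_0: "cmat 0 = 0"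
  by (simp_all add: vec_eq_iff matrix_matrix_mult_def cmat_def transpose_def)

definition comega :: "complex^('n::finite+'n) \<Rightarrow> complex^('n+'n) \<Rightarrow> complex" where
  "comega u v = cbil (cmat Jmat *v u) v"

lemma comega_cvec: "comega (cvec x) (cvec y) = complex_of_real (omega x y)"
  by (simp add: comega_def omega_def cmat_mult_cvec cbil_def inner_vec_def)

lemma comega_0_left [simp]: "comega 0 v = 0" and comega_0_right [simp]: "comega u 0 = 0"
  by (simp_all add: comega_def)

lemma comega_shift:
  "comega ((N - mat l) *v u) v = comega (N *v u) v - l * comega u v"
  "comega u ((N - mat l) *v v) = comega u (N *v v) - l * comega u v"
  by (simp_all add: comega_def matrix_vector_mult_diff_rdistrib mat_mult_vec
      matrix_vector_right_distrib vector_scalar_commute cbil_diff_left cbil_diff_right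
      cbil_smult_left cbil_smult_right matrix_vector_mult_diff_distrib)

lemma inner_matrix_transpose: "(A *v x) \<bullet> y = x \<bullet> (transpose A *v (y::real^'n))"
  by (metis dot_lmul_matrix vector_transpose_matrix transpose_transpose)

lemma matrix_eq_0_if_mult_eq_0: "(\<And>y. G *v y = 0) \<Longrightarrow> G = (0::real^'n^'m)"
  by (metis matrix_eq matrix_vector_mult_0)

text \<open>The infinitesimal symplecticity of \<open>M\<close> is the matrix identity
  \<open>(J M)\<^sup>T + J\<^sup>T M = 0\<close>, which survives complexification.\<close>

lemma hamiltonian_complexified:
  fixes M :: "real^('n::finite+'n)^('n+'n)"
  assumes H: "\<And>x y. omega (M *v x) y + omega x (M *v y) = 0"
  shows "comega (cmat M *v u) v + comega u (cmat M *v v) = 0"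
proof -
  define G where "G = transpose (Jmat ** M) + transpose Jmat ** M"
  have "x \<bullet> (G *v y) = 0" for x y
  proof -
    have "omega (M *v x) y = x \<bullet> (transpose (Jmat ** M) *v y)"
      unfolding omega_def matrix_vector_mul_assoc inner_matrix_transpose ..
    moreover have "omega x (M *v y) = x \<bullet> ((transpose Jmat ** M) *v y)"
      unfolding omega_def inner_matrix_transpose matrix_vector_mul_assoc ..
    ultimately show ?thesis
      using H[of x y] unfolding G_def by (simp add: matrix_vector_mult_add_rdistrib inner_add_right)
  qed
  then have "G = 0" by (metis matrix_eq_0_if_mult_eq_0 inner_eq_zero_iff)
  have "comega (cmat M *v u) v + comega u (cmat M *v v)
      = cbil u (transpose (cmat Jmat ** cmat M) *v v) + cbil u (transpose (cmat Jmat) *v (cmat M *v v))"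
    unfolding comega_def matrix_vector_mul_assoc cbil_transpose ..
  also have "\<dots> = cbil u (cmat G *v v)"
    unfolding G_def cmat_add cmat_mult cmat_transpose
    by (simp add: matrix_vector_mult_add_rdistrib cbil_add_right matrix_vector_mul_assoc)
  finally show ?thesis unfolding \<open>G = 0\<close> cmat_0 by simp
qed

lemma comega_gen_eigenvectors_eq_0:
  fixes N :: "complex^('n::finite+'n)^('n+'n)"
  assumes Ham: "\<And>u v. comega (N *v u) v + comega u (N *v v) = 0" and lm: "l + m \<noteq> 0"
  shows "(((*v) (N - mat l)) ^^ a) u = 0 \<Longrightarrow> (((*v) (N - mat m)) ^^ b) v = 0 \<Longrightarrow> comega u v = 0"
proof (induction "a + b" arbitrary: a b u v rule: less_induct)
  case less
  show ?case
  proof (cases "a = 0 \<or> b = 0")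
    case True
    then show ?thesis using less.prems by auto
  next
    case False
    then obtain a' b' where ab: "a = Suc a'" "b = Suc b'" by (metis not0_implies_Suc)
    have u': "(((*v) (N - mat l)) ^^ a') ((N - mat l) *v u) = 0"
      using less.prems(1) unfolding ab by (simp only: funpow_Suc_right o_def)
    have v': "(((*v) (N - mat m)) ^^ b') ((N - mat m) *v v) = 0"
      using less.prems(2) unfolding ab by (simp only: funpow_Suc_right o_def)
    have "comega ((N - mat l) *v u) v = 0"
      by (rule less.hyps[OF _ u' less.prems(2)]) (simp add: ab)
    moreover have "comega u ((N - mat m) *v v) = 0"
      by (rule less.hyps[OF _ less.prems(1) v']) (simp add: ab)
    moreover have "(l + m) * comega u v
      = - (comega ((N - mat l) *v u) v + comega u ((N - mat m) *v v))"
      unfolding comega_shift using Ham[of u v] by (simp add: algebra_simps)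
    ultimately show ?thesis using lm by simp
  qed
qed

lemma spectral_subspace_isotropic:
  fixes M :: "real^('n::finite+'n)^('n+'n)"
  assumes H: "\<And>x y. omega (M *v x) y + omega x (M *v y) = 0"
    and S: "\<And>l m. l \<in> S \<Longrightarrow> m \<in> S \<Longrightarrow> l + m \<noteq> 0"
    and x: "x \<in> spectral_subspace M S" and y: "y \<in> spectral_subspace M S"
  shows "omega x y = 0"
proof -
  obtain F1 w1 where 1: "finite F1" "F1 \<subseteq> S" "\<forall>l\<in>F1. w1 l \<in> gen_eigenspace (cmat M) l"
    "cvec x = sum w1 F1"
    using x unfolding mem_spectral_subspace_iff gen_eigensum_def by blast
  obtain F2 w2 where 2: "finite F2" "F2 \<subseteq> S" "\<forall>l\<in>F2. w2 l \<in> gen_eigenspace (cmat M) l"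
    "cvec y = sum w2 F2"
    using y unfolding mem_spectral_subspace_iff gen_eigensum_def by blast
  have "complex_of_real (omega x y) = (\<Sum>m\<in>F2. \<Sum>l\<in>F1. comega (w1 l) (w2 m))"
    unfolding comega_cvec[symmetric] 1(4) 2(4) comega_def vec.sum cbil_sum_left cbil_sum_right ..
  also have "\<dots> = 0"
  proof (intro sum.neutral ballI)
    fix m l assume m: "m \<in> F2" and l: "l \<in> F1"
    show "comega (w1 l) (w2 m) = 0"
    proof (rule comega_gen_eigenvectors_eq_0[OF hamiltonian_complexified[OF H], where l = l and m = m])
      show "l + m \<noteq> 0" using S 1(2) 2(2) l m by blast
    qed (use 1(3) 2(3) l m in \<open>auto simp: gen_eigenspace_def\<close>)
  qed
  finally show ?thesis by simp
qed

section \<open>Lagrangian stable and unstable subspaces\<close>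

lemma dim_le_if_qp_neg:
  fixes V :: "(real^('n::finite+'n)) set"
  assumes "subspace V" "\<And>x. x \<in> V \<Longrightarrow> x \<noteq> 0 \<Longrightarrow> qv x \<bullet> pv x < 0"
  shows "dim V \<le> CARD('n)"
proof -
  have "dim V + dim (graph_mat (mat 1 :: real^'n^'n)) \<le> DIM(real^('n+'n))"
    by (rule dim_add_le_if_neg_nonneg[OF assms(1) subspace_graph_mat assms(2)])
      (auto simp: graph_mat_def)
  then show ?thesis by (simp add: dim_graph_mat)
qed

lemma dim_le_if_qp_pos:
  fixes V :: "(real^('n::finite+'n)) set"
  assumes "subspace V" "\<And>x. x \<in> V \<Longrightarrow> x \<noteq> 0 \<Longrightarrow> 0 < qv x \<bullet> pv x"
  shows "dim V \<le> CARD('n)"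
proof -
  have "dim V + dim (graph_mat (- mat 1 :: real^'n^'n)) \<le> DIM(real^('n+'n))"
    by (rule dim_add_le_if_neg_nonneg[OF assms(1) subspace_graph_mat, of "\<lambda>x. - (qv x \<bullet> pv x)"])
      (use assms(2) in \<open>auto simp: graph_mat_def matrix_vector_mult_uminus\<close>)
  then show ?thesis by (simp add: dim_graph_mat)
qed

lemma lagrangian_if_isotropic_complements:
  fixes A B :: "(real^('n::finite+'n)) set"
  assumes "subspace A" "subspace B" "dim A \<le> CARD('n)" "dim B \<le> CARD('n)"
    and "\<And>x y. x \<in> A \<Longrightarrow> y \<in> A \<Longrightarrow> omega x y = 0" "\<And>x y. x \<in> B \<Longrightarrow> y \<in> B \<Longrightarrow> omega x y = 0"
    and "\<And>x. \<exists>a\<in>A. \<exists>b\<in>B. x = a + b"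
  shows "lagrangian A" "lagrangian B"
proof -
  have "UNIV \<subseteq> {a + b |a b. a \<in> A \<and> b \<in> B}"
  proof
    fix x :: "real^('n+'n)"
    obtain a b where "a \<in> A" "b \<in> B" "x = a + b" using assms(7)[of x] by blast
    then show "x \<in> {a + b |a b. a \<in> A \<and> b \<in> B}" by blast
  qed
  then have "dim (UNIV :: (real^('n+'n)) set) \<le> dim {a + b |a b. a \<in> A \<and> b \<in> B}"
    by (rule dim_subset)
  then have "2 * CARD('n) \<le> dim A + dim B"
    using dim_sums_Int[OF assms(1,2)] by simp
  then show "lagrangian A" "lagrangian B"
    unfolding lagrangian_def using assms by auto
qed

definition half_swap :: "real^('n::finite+'n) \<Rightarrow> real^('n+'n)" where
  "half_swap y = (1/2) *\<^sub>R qp_vec (pv y) (qv y)"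

lemma linear_half_swap: "linear half_swap"
  unfolding half_swap_def
  by (rule linearI) (simp_all add: pv_add qv_add pv_scaleR qv_scaleR qp_vec_add qp_vec_scaleR algebra_simps)

lemma inner_half_swap: "y \<bullet> half_swap z + z \<bullet> half_swap y = qv y \<bullet> pv z + qv z \<bullet> pv y"
  unfolding half_swap_def inner_scaleR_right
  using inner_qv_pv[of y "qp_vec (pv z) (qv z)"] inner_qv_pv[of z "qp_vec (pv y) (qv y)"]
  by (simp add: inner_commute algebra_simps)

lemma inner_half_swap_self: "y \<bullet> half_swap y = qv y \<bullet> pv y"
  using inner_half_swap[of y y] by simp

theorem hamiltonian_Es_Eu_lagrangian:
  fixes M :: "real^('n::finite+'n)^('n+'n)"
  assumes H: "\<And>x y. omega (M *v x) y + omega x (M *v y) = 0"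
    and c: "0 < c" and D: "\<And>y. c * (norm y)^2 \<le> qv y \<bullet> pv (M *v y) + qv (M *v y) \<bullet> pv y"
  shows "lagrangian (Es M)" "lagrangian (Eu M)"
    and "\<And>x. x \<in> Es M \<Longrightarrow> x \<noteq> 0 \<Longrightarrow> qv x \<bullet> pv x < 0"
    and "\<And>x. x \<in> Eu M \<Longrightarrow> x \<noteq> 0 \<Longrightarrow> 0 < qv x \<bullet> pv x"
proof -
  have DL: "c * (norm y)^2 \<le> y \<bullet> half_swap (M *v y) + (M *v y) \<bullet> half_swap y" for y
    using D[of y] by (simp add: inner_half_swap)
  show neg: "qv x \<bullet> pv x < 0" if "x \<in> Es M" "x \<noteq> 0" for x
    using lyapunov_neg_on_Es[OF linear_half_swap c DL that] by (simp add: inner_half_swap_self)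
  show pos: "0 < qv x \<bullet> pv x" if "x \<in> Eu M" "x \<noteq> 0" for x
    using lyapunov_pos_on_Eu[OF linear_half_swap c DL that] by (simp add: inner_half_swap_self)
  have "0 < y \<bullet> half_swap (M *v y) + (M *v y) \<bullet> half_swap y" if "y \<noteq> 0" for y
    using DL[of y] c that by (smt (verit) mult_pos_pos zero_less_norm_iff zero_less_power)
  then have decomp: "\<exists>a\<in>Es M. \<exists>b\<in>Eu M. x = a + b" for x
    using Es_plus_Eu no_imaginary_eigenvalue[OF linear_half_swap] by metis
  have sEs: "subspace (Es M)" and sEu: "subspace (Eu M)"
    unfolding Es_def Eu_def by (rule subspace_spectral_subspace)+
  have "omega x y = 0" if "x \<in> Es M" "y \<in> Es M" for x y
    using spectral_subspace_isotropic[OF H _ that[unfolded Es_def]] by (force simp: complex_eq_iff)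
  moreover have "omega x y = 0" if "x \<in> Eu M" "y \<in> Eu M" for x y
    using spectral_subspace_isotropic[OF H _ that[unfolded Eu_def]] by (force simp: complex_eq_iff)
  ultimately show "lagrangian (Es M)" "lagrangian (Eu M)"
    using lagrangian_if_isotropic_complements[OF sEs sEu dim_le_if_qp_neg[OF sEs neg]
        dim_le_if_qp_pos[OF sEu pos] _ _ decomp] by blast+
qed

section \<open>The block Hamiltonian matrices \<open>J B(\<plusminus>\<infinity>)\<close>\<close>

lemma transpose_blockmat:
  "transpose (blockmat A B C D) = blockmat (transpose A) (transpose C) (transpose B) (transpose D)"
  by (simp add: vec_eq_iff transpose_def blockmat_def split: sum.split)

lemma Jmat_Jmat: "Jmat *v (Jmat *v z) = - z"
  by (metis Jmat_qp_vec qp_vec_qv_pv qp_vec_uminus minus_minus)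

lemma inner_Jmat_Jmat: "(Jmat *v a) \<bullet> (Jmat *v b) = a \<bullet> b"
  using inner_qv_pv[of a b] Jmat_qp_vec[of "qv a" "pv a"] Jmat_qp_vec[of "qv b" "pv b"]
  by (simp add: inner_qp_vec add.commute)

lemma hamiltonian_Jmat_mult:
  assumes "symmetric_mat B"
  shows "omega ((Jmat ** B) *v x) y + omega x ((Jmat ** B) *v y) = 0"
proof -
  have "omega ((Jmat ** B) *v x) y = - ((B *v x) \<bullet> y)"
    unfolding omega_def matrix_vector_mul_assoc[symmetric] Jmat_Jmat by simp
  moreover have "omega x ((Jmat ** B) *v y) = x \<bullet> (B *v y)"
    unfolding omega_def matrix_vector_mul_assoc[symmetric] inner_Jmat_Jmat ..
  ultimately show ?thesis using symmetric_mat_inner[OF assms, of x y] by simp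
qed

lemma pos_homogeneous_lower_bound:
  fixes f :: "'a::euclidean_space \<Rightarrow> real"
  assumes cont: "continuous_on UNIV f" and hom: "\<And>t y. f (t *\<^sub>R y) = t^2 * f y"
    and pos: "\<And>y. y \<noteq> 0 \<Longrightarrow> 0 < f y"
  obtains c where "0 < c" "\<And>y. c * (norm y)^2 \<le> f y"
proof -
  obtain e :: 'a where "norm e = 1" using vector_choose_size[of 1] by auto
  then have ne: "sphere (0::'a) 1 \<noteq> {}" by auto
  obtain x0 where x0: "x0 \<in> sphere 0 1" "\<And>y. y \<in> sphere 0 1 \<Longrightarrow> f x0 \<le> f y"
    using continuous_attains_inf[OF compact_sphere ne continuous_on_subset[OF cont subset_UNIV]]
    by blast
  have "f x0 * (norm y)^2 \<le> f y" for y
  proof (cases "y = 0")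
    case True
    then show ?thesis using hom[of 0 0] by simp
  next
    case False
    then have "f x0 \<le> f ((1 / norm y) *\<^sub>R y)" by (intro x0(2)) simp
    then have "f x0 * (norm y)^2 \<le> f ((1 / norm y) *\<^sub>R y) * (norm y)^2"
      by (rule mult_right_mono) simp
    moreover have "f y = (norm y)^2 * f ((1 / norm y) *\<^sub>R y)"
      using hom[of "norm y" "(1 / norm y) *\<^sub>R y"] False by simp
    ultimately show ?thesis by (simp add: mult.commute)
  qed
  moreover have "0 < f x0" using x0(1) by (intro pos) auto
  ultimately show ?thesis using that by blast
qed

lemma pos_def_upper_left_block:
  fixes P Q R :: "real^'n^'n"
  assumes "symmetric_mat P" "pos_def (blockmat P Q (transpose Q) R)"
  shows "pos_def P"
  unfolding pos_def_def
proof (intro conjI allI impI)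
  fix u :: "real^'n" assume "u \<noteq> 0"
  then have "0 < qp_vec u 0 \<bullet> (blockmat P Q (transpose Q) R *v qp_vec u 0)"
    using assms(2) unfolding pos_def_def by (simp add: qp_vec_eq_0_iff)
  then show "0 < u \<bullet> (P *v u)" by (simp add: blockmat_qp_vec inner_qp_vec)
qed (rule assms(1))

lemma symmetric_blockmat_limit:
  assumes "symmetric_mat P" "symmetric_mat R" "invertible P"
  shows "symmetric_mat (blockmat (matrix_inv P) (- (matrix_inv P ** Q))
    (- (transpose Q ** matrix_inv P)) (transpose Q ** matrix_inv P ** Q - R))"
proof -
  have "transpose (matrix_inv P) = matrix_inv P"
    using symmetric_mat_matrix_inv[OF assms(3,1)] unfolding symmetric_mat_def .
  then show ?thesis
    using assms(2) unfolding symmetric_mat_def transpose_blockmat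
    by (simp add: transpose_uminus transpose_diff matrix_transpose_mul matrix_mul_assoc)
qed

lemma qp_derivative_block:
  fixes P Q R :: "real^'n^'n"
  assumes Pi: "invertible P"
  defines "M \<equiv> Jmat ** blockmat (matrix_inv P) (- (matrix_inv P ** Q))
            (- (transpose Q ** matrix_inv P)) (transpose Q ** matrix_inv P ** Q - R)"
  shows "qv y \<bullet> pv (M *v y) + qv (M *v y) \<bullet> pv y
    = qp_vec (matrix_inv P *v (qv y - Q *v pv y)) (pv y)
      \<bullet> (blockmat P Q (transpose Q) R *v qp_vec (matrix_inv P *v (qv y - Q *v pv y)) (pv y))"
proof -
  define q p where "q = qv y" and "p = pv y"
  define u where "u = matrix_inv P *v (q - Q *v p)"
  have q: "q = P *v u + Q *v p"
    unfolding u_def by (simp add: matrix_inv_mult_vec[OF Pi])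
  have "M *v y = qp_vec (transpose Q *v u + R *v p) u"
    unfolding M_def qp_vec_qv_pv[of y, symmetric, unfolded q_def[symmetric] p_def[symmetric]]
      matrix_vector_mul_assoc[symmetric] blockmat_qp_vec Jmat_qp_vec u_def
    by (simp add: qp_vec_eq_iff matrix_vector_mult_diff_rdistrib matrix_vector_right_distrib
        matrix_vector_mult_diff_distrib matrix_vector_mul_assoc[symmetric]
        matrix_vector_mult_uminus algebra_simps)
  then show ?thesis
    unfolding q_def[symmetric] p_def[symmetric] u_def[symmetric]
    by (simp add: q blockmat_qp_vec inner_qp_vec inner_add_left inner_add_right inner_commute)
qed

theorem block_hamiltonian_Es_Eu:
  fixes P Q R :: "real^'n^'n"
  assumes Ps: "symmetric_mat P" and Rs: "symmetric_mat R"
    and pd: "pos_def (blockmat P Q (transpose Q) R)"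
  defines "M \<equiv> Jmat ** blockmat (matrix_inv P) (- (matrix_inv P ** Q))
            (- (transpose Q ** matrix_inv P)) (transpose Q ** matrix_inv P ** Q - R)"
  shows "lagrangian (Es M)" "lagrangian (Eu M)"
    and "\<And>x. x \<in> Es M \<Longrightarrow> x \<noteq> 0 \<Longrightarrow> qv x \<bullet> pv x < 0"
    and "\<And>x. x \<in> Eu M \<Longrightarrow> x \<noteq> 0 \<Longrightarrow> 0 < qv x \<bullet> pv x"
proof -
  have Pi: "invertible P" by (rule invertible_if_pos_def[OF pos_def_upper_left_block[OF Ps pd]])
  define Dq where "Dq y = qv y \<bullet> pv (M *v y) + qv (M *v y) \<bullet> pv y" for y
  have "0 < Dq y" if "y \<noteq> 0" for y
  proof -
    have "qp_vec (matrix_inv P *v (qv y - Q *v pv y)) (pv y) \<noteq> 0"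
    proof
      assume "qp_vec (matrix_inv P *v (qv y - Q *v pv y)) (pv y) = 0"
      then have p0: "pv y = 0" and "matrix_inv P *v qv y = 0" by (auto simp: qp_vec_eq_0_iff)
      then have "qv y = 0" using matrix_inv_mult_vec[OF Pi, of "qv y"] by simp
      then show False using that p0 qp_vec_qv_pv[of y] qp_vec_0 by metis
    qed
    then show ?thesis
      using pd unfolding Dq_def M_def qp_derivative_block[OF Pi] pos_def_def by blast
  qed
  moreover have "continuous_on UNIV Dq"
    unfolding Dq_def
    by (intro continuous_on_add continuous_on_inner linear_continuous_on_compose[OF _ linear_qv]
        linear_continuous_on_compose[OF _ linear_pv] linear_continuous_on_compose[OF _ matrix_vector_mul_linear]
        continuous_on_id)
  moreover have "Dq (t *\<^sub>R y) = t^2 * Dq y" for t y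
    unfolding Dq_def
    by (simp add: matrix_vector_mult_scaleR qv_scaleR pv_scaleR power2_eq_square algebra_simps)
  ultimately obtain c where "0 < c" "\<And>y. c * (norm y)^2 \<le> Dq y"
    using pos_homogeneous_lower_bound by metis
  then show "lagrangian (Es M)" "lagrangian (Eu M)"
    and "\<And>x. x \<in> Es M \<Longrightarrow> x \<noteq> 0 \<Longrightarrow> qv x \<bullet> pv x < 0"
    and "\<And>x. x \<in> Eu M \<Longrightarrow> x \<noteq> 0 \<Longrightarrow> 0 < qv x \<bullet> pv x"
    using hamiltonian_Es_Eu_lagrangian[OF _ \<open>0 < c\<close>, of M] unfolding Dq_def M_def
    using hamiltonian_Jmat_mult[OF symmetric_blockmat_limit[OF Ps Rs Pi]] by blast+
qed

theorem corollary4p4: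
  fixes Pm Pp Rm Rp Qm Qp :: "real^'n^'n"
  assumes "symmetric_mat Pm" and "symmetric_mat Pp" and "symmetric_mat Rm" and "symmetric_mat Rp"
    and "pos_def (blockmat Pm Qm (transpose Qm) Rm)"
    and "pos_def (blockmat Pp Qp (transpose Qp) Rp)"
  shows "triple_index
     (Eu (Jmat ** blockmat (matrix_inv Pm) (- (matrix_inv Pm ** Qm))
            (- (transpose Qm ** matrix_inv Pm)) (transpose Qm ** matrix_inv Pm ** Qm - Rm)))
     (Es (Jmat ** blockmat (matrix_inv Pp) (- (matrix_inv Pp ** Qp))
            (- (transpose Qp ** matrix_inv Pp)) (transpose Qp ** matrix_inv Pp ** Qp - Rp)))
     LD = 0"
proof -
  note minus = block_hamiltonian_Es_Eu[OF assms(1,3,5)]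
  note plus = block_hamiltonian_Es_Eu[OF assms(2,4,6)]
  show ?thesis
    by (rule triple_index_LD_eq_0[OF minus(2) plus(1) minus(4) plus(3)])
qed

end
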